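(* Let $\rho,\sigma$ be quantum states on a $d$-dimensional Hilbert space with $[\rho,\sigma]=0$, and let $\rho',\sigma'$ be quantum states on a $d'$-dimensional Hilbert space with $[\rho',\sigma']=0$, where $\sigma$ and $\sigma'$ are both full-rank. For $1>\epsilon>0$ define $f_\sigma(\rho,\epsilon):=\sqrt{V(\rho\|\sigma)\left(2\epsilon^{-1}-1\right)}$ and analogously $f_{\sigma'}(\rho',\epsilon):=\sqrt{V(\rho'\|\sigma')\left(2\epsilon^{-1}-1\right)}$. If $$S(\rho\|\sigma)-f_\sigma(\rho,\epsilon)\;\geq\; S(\rho'\|\sigma')+f_{\sigma'}(\rho',\epsilon),$$ then $(\rho,\sigma)\succ_\epsilon(\rho',\sigma')$.
   Context: All logarithms are base 2. The relative entropy is $S(\rho\|\sigma)=\mathrm{Tr}(\rho(\log\rho-\log\sigma))$ and the relative variance (variance of relative surprisal) is $V(\rho\|\sigma)=\mathrm{Tr}\left(\rho(\log\rho-\log\sigma)^2\right)-S(\rho\|\sigma)^2$. The trace distance is $D(\rho,\tau)=\frac12\|\rho-\tau\|_1$. For pairs of states, $(\rho,\sigma)\succ(\rho',\sigma')$ means there exists a quantum channel $\mathcal E$ (from states on the first Hilbert space to states on the second) with $\mathcal E(\rho)=\rho'$ and $\mathcal E(\sigma)=\sigma'$. Moreover $(\rho,\sigma)\succ_\epsilon(\rho',\sigma')$ means there exists a state $\rho'_\epsilon$ with $(\rho,\sigma)\succ(\rho'_\epsilon,\sigma')$ and $D(\rho',\rho'_\epsilon)\le\epsilon$. *)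

theory Defs
  imports Complex_Main "Jordan_Normal_Form.Matrix"
begin

definition mtrace :: "complex mat \<Rightarrow> complex" where
  "mtrace A = (\<Sum>i<dim_row A. A $$ (i,i))"

definition cadj :: "complex mat \<Rightarrow> complex mat" where
  "cadj A = mat (dim_col A) (dim_row A) (\<lambda>(i,j). cnj (A $$ (j,i)))"

definition hermitian_mat :: "nat \<Rightarrow> complex mat \<Rightarrow> bool" where
  "hermitian_mat n A \<longleftrightarrow> A \<in> carrier_mat n n \<and> cadj A = A"

definition psd_mat :: "nat \<Rightarrow> complex mat \<Rightarrow> bool" where
  "psd_mat n A \<longleftrightarrow> hermitian_mat n A \<and>
     (\<forall>v \<in> carrier_vec n. 0 \<le> Re (map_vec cnj v \<bullet> (A *\<^sub>v v)))"

definition density_mat :: "nat \<Rightarrow> complex mat \<Rightarrow> bool" where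
  "density_mat n \<rho> \<longleftrightarrow> psd_mat n \<rho> \<and> mtrace \<rho> = 1"

definition unitary_mat :: "nat \<Rightarrow> complex mat \<Rightarrow> bool" where
  "unitary_mat n U \<longleftrightarrow> U \<in> carrier_mat n n \<and> cadj U * U = 1\<^sub>m n"

definition real_diag :: "nat \<Rightarrow> (nat \<Rightarrow> real) \<Rightarrow> complex mat" where
  "real_diag n lam = mat n n (\<lambda>(i,j). if i = j then complex_of_real (lam i) else 0)"

(* functional calculus for Hermitian matrices via a spectral decomposition
   A = U diag(lam) U^*; the result f(A) = U diag(f o lam) U^* does not depend
   on the chosen decomposition *)
definition mat_fun :: "(real \<Rightarrow> real) \<Rightarrow> complex mat \<Rightarrow> complex mat" where
  "mat_fun f A = (SOME B. \<exists>U lam. unitary_mat (dim_row A) U \<and>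
       A = U * real_diag (dim_row A) lam * cadj U \<and>
       B = U * real_diag (dim_row A) (\<lambda>i. f (lam i)) * cadj U)"

(* matrix logarithm, base 2 (on the kernel of a singular state the value is
   irrelevant for the quantities below) *)
definition mlog :: "complex mat \<Rightarrow> complex mat" where
  "mlog A = mat_fun (log 2) A"

definition rel_entropy :: "complex mat \<Rightarrow> complex mat \<Rightarrow> real" where
  "rel_entropy \<rho> \<sigma> = Re (mtrace (\<rho> * (mlog \<rho> - mlog \<sigma>)))"

definition rel_variance :: "complex mat \<Rightarrow> complex mat \<Rightarrow> real" where
  "rel_variance \<rho> \<sigma> =
     Re (mtrace (\<rho> * ((mlog \<rho> - mlog \<sigma>) * (mlog \<rho> - mlog \<sigma>)))) - (rel_entropy \<rho> \<sigma>)\<^sup>2"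

definition trace_norm :: "complex mat \<Rightarrow> real" where
  "trace_norm A = Re (mtrace (mat_fun sqrt (cadj A * A)))"

definition trace_dist :: "complex mat \<Rightarrow> complex mat \<Rightarrow> real" where
  "trace_dist \<rho> \<tau> = trace_norm (\<rho> - \<tau>) / 2"

(* (id_k \<otimes> E) applied to a (k*d) x (k*d) block matrix: E acts on each d x d block *)
definition ampliate :: "nat \<Rightarrow> nat \<Rightarrow> nat \<Rightarrow> (complex mat \<Rightarrow> complex mat) \<Rightarrow> complex mat \<Rightarrow> complex mat" where
  "ampliate d d' k E X = mat (k * d') (k * d') (\<lambda>(i,j).
      E (mat d d (\<lambda>(r,s). X $$ ((i div d') * d + r, (j div d') * d + s))) $$ (i mod d', j mod d'))"

definition quantum_channel :: "nat \<Rightarrow> nat \<Rightarrow> (complex mat \<Rightarrow> complex mat) \<Rightarrow> bool" where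
  "quantum_channel d d' E \<longleftrightarrow>
     (\<forall>A \<in> carrier_mat d d. E A \<in> carrier_mat d' d') \<and>
     (\<forall>A \<in> carrier_mat d d. \<forall>B \<in> carrier_mat d d. E (A + B) = E A + E B) \<and>
     (\<forall>c. \<forall>A \<in> carrier_mat d d. E (c \<cdot>\<^sub>m A) = c \<cdot>\<^sub>m E A) \<and>
     (\<forall>A \<in> carrier_mat d d. mtrace (E A) = mtrace A) \<and>
     (\<forall>k. \<forall>X. psd_mat (k * d) X \<longrightarrow> psd_mat (k * d') (ampliate d d' k E X))"

definition pair_majorizes :: "nat \<Rightarrow> nat \<Rightarrow> complex mat \<Rightarrow> complex mat \<Rightarrow> complex mat \<Rightarrow> complex mat \<Rightarrow> bool" where
  "pair_majorizes d d' \<rho> \<sigma> \<rho>' \<sigma>' \<longleftrightarrow>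
     (\<exists>E. quantum_channel d d' E \<and> E \<rho> = \<rho>' \<and> E \<sigma> = \<sigma>')"

definition pair_majorizes_approx :: "nat \<Rightarrow> nat \<Rightarrow> real \<Rightarrow> complex mat \<Rightarrow> complex mat \<Rightarrow> complex mat \<Rightarrow> complex mat \<Rightarrow> bool" where
  "pair_majorizes_approx d d' \<epsilon> \<rho> \<sigma> \<rho>' \<sigma>' \<longleftrightarrow>
     (\<exists>\<rho>e. density_mat d' \<rho>e \<and> pair_majorizes d d' \<rho> \<sigma> \<rho>e \<sigma>' \<and> trace_dist \<rho>' \<rho>e \<le> \<epsilon>)"

definition f_dev :: "complex mat \<Rightarrow> complex mat \<Rightarrow> real \<Rightarrow> real" where
  "f_dev \<rho> \<sigma> \<epsilon> = sqrt (rel_variance \<rho> \<sigma> * (2 / \<epsilon> - 1))"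

end

(*
  Both pairs of commuting states are diagonal in a common orthonormal basis, so everything reduces
  to pairs of probability vectors (p, q) and (p', q'), and the relative entropy and relative variance
  become the mean and variance under p of the log-likelihood ratio x = log p - log q.

  By Cantelli's one-sided Chebyshev inequality the event A = {x >= S - f} has p-probability at least
  1 - epsilon/2, and on A we have q <= 2^(-(S - f)) p; dually B = {x' <= S' + f'} has p'-probability at
  least 1 - epsilon/2, and on B we have p' <= 2^(S' + f') q'.  Since S - f >= S' + f', a stochastic map
  that only records whether the input lies in A can send q exactly to q' and p to within
  epsilon in l1-distance of p'.  Measuring in the eigenbasis of (rho, sigma), applying this map and
  preparing eigenvectors of (rho', sigma') gives the required channel.
*)

theory Submission
  imports Defs "Jordan_Normal_Form.Schur_Decomposition" "Jordan_Normal_Form.Spectral_Radius"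
begin

section \<open>Probability vectors\<close>

definition prob_vec :: "nat \<Rightarrow> (nat \<Rightarrow> real) \<Rightarrow> bool" where
  "prob_vec n p \<longleftrightarrow> (\<forall>i<n. 0 \<le> p i) \<and> (\<Sum>i<n. p i) = 1"

definition expect :: "nat \<Rightarrow> (nat \<Rightarrow> real) \<Rightarrow> (nat \<Rightarrow> real) \<Rightarrow> real" where
  "expect n p x = (\<Sum>i<n. p i * x i)"

definition variance :: "nat \<Rightarrow> (nat \<Rightarrow> real) \<Rightarrow> (nat \<Rightarrow> real) \<Rightarrow> real" where
  "variance n p x = expect n p (\<lambda>i. (x i)\<^sup>2) - (expect n p x)\<^sup>2"

definition log_ratio :: "(nat \<Rightarrow> real) \<Rightarrow> (nat \<Rightarrow> real) \<Rightarrow> nat \<Rightarrow> real" where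
  "log_ratio p q i = log 2 (p i) - log 2 (q i)"

lemma prob_vec_nonneg: "prob_vec n p \<Longrightarrow> i < n \<Longrightarrow> 0 \<le> p i"
  by (simp add: prob_vec_def)

lemma prob_vec_sum: "prob_vec n p \<Longrightarrow> (\<Sum>i<n. p i) = 1"
  by (simp add: prob_vec_def)

lemma prob_vec_sum_subset:
  assumes p: "prob_vec n p" and A: "A \<subseteq> {..<n}"
  shows "0 \<le> (\<Sum>i\<in>A. p i)" and "(\<Sum>i\<in>A. p i) \<le> 1"
proof -
  show "0 \<le> (\<Sum>i\<in>A. p i)" using A p by (intro sum_nonneg) (auto simp: prob_vec_def)
  have "(\<Sum>i\<in>A. p i) \<le> (\<Sum>i<n. p i)" using A p by (intro sum_mono2) (auto simp: prob_vec_def)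
  then show "(\<Sum>i\<in>A. p i) \<le> 1" using p by (simp add: prob_vec_def)
qed

lemma prob_vec_mass_compl:
  assumes "prob_vec n p"
  shows "(\<Sum>i | i < n \<and> P i. p i) = 1 - (\<Sum>i | i < n \<and> \<not> P i. p i)"
proof -
  have "(\<Sum>i<n. p i) = (\<Sum>i\<in>{..<n} \<inter> Collect P. p i) + (\<Sum>i\<in>{..<n} - Collect P. p i)"
    by (rule sum.Int_Diff[OF finite_lessThan])
  moreover have "{..<n} \<inter> Collect P = {i. i < n \<and> P i}" "{..<n} - Collect P = {i. i < n \<and> \<not> P i}"
    by auto
  ultimately show ?thesis using assms by (simp add: prob_vec_def)
qed

lemma prob_vec_mass_pos_part:
  assumes "prob_vec n p"
  shows "(\<Sum>i | i < n \<and> 0 < p i \<and> P i. p i) = (\<Sum>i | i < n \<and> P i. p i)"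
  using assms by (intro sum.mono_neutral_left) (auto simp: prob_vec_def order.order_iff_strict)

lemma prob_vec_mix:
  assumes "prob_vec n u" "prob_vec n v" "0 \<le> t" "t \<le> 1"
  shows "prob_vec n (\<lambda>j. t * u j + (1 - t) * v j)"
  using assms by (simp add: prob_vec_def sum.distrib sum_distrib_left[symmetric])

lemma prob_vec_restrict:
  assumes p: "prob_vec n p" and B: "B \<subseteq> {..<n}" and pos: "0 < (\<Sum>j\<in>B. p j)"
  shows "prob_vec n (\<lambda>j. if j \<in> B then p j / (\<Sum>j\<in>B. p j) else 0)"
proof -
  have "(\<Sum>j<n. if j \<in> B then p j / (\<Sum>j\<in>B. p j) else 0) = (\<Sum>j\<in>B. p j / (\<Sum>j\<in>B. p j))"
    using B by (simp add: sum.If_cases Int_absorb1)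
  also have "\<dots> = 1" using pos by (simp flip: sum_divide_distrib)
  finally show ?thesis using p pos by (simp add: prob_vec_def)
qed

lemma prob_vec_residual:
  assumes q: "prob_vec n q" and \<pi>: "prob_vec n \<pi>" and t: "0 \<le> t" "t \<le> 1"
    and le: "\<And>j. j < n \<Longrightarrow> t * \<pi> j \<le> q j"
  obtains \<rho> where "prob_vec n \<rho>" and "\<And>j. j < n \<Longrightarrow> q j = t * \<pi> j + (1 - t) * \<rho> j"
proof (cases "t = 1")
  case True
  have "(\<Sum>j<n. q j - \<pi> j) = 0" using q \<pi> by (simp add: prob_vec_def sum_subtractf)
  then have "\<forall>j\<in>{..<n}. q j - \<pi> j = 0"
    using le True by (subst sum_nonneg_eq_0_iff[symmetric]) auto
  then show ?thesis using that[OF q] True by simp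
next
  case False
  define \<rho> where "\<rho> = (\<lambda>j. (q j - t * \<pi> j) / (1 - t))"
  have "prob_vec n \<rho>"
    using q \<pi> le t False
    by (auto simp: prob_vec_def \<rho>_def sum_subtractf sum_distrib_left[symmetric] simp flip: sum_divide_distrib)
  moreover have "q j = t * \<pi> j + (1 - t) * \<rho> j" for j
    using False by (simp add: \<rho>_def)
  ultimately show ?thesis using that by blast
qed

lemma l1_dist_le_overlap:
  assumes u: "prob_vec n u" and v: "prob_vec n v" and m: "\<And>j. j < n \<Longrightarrow> m j \<le> u j \<and> m j \<le> v j"
  shows "(\<Sum>j<n. \<bar>u j - v j\<bar>) \<le> 2 * (1 - (\<Sum>j<n. m j))"
proof -
  have "(\<Sum>j<n. \<bar>u j - v j\<bar>) \<le> (\<Sum>j<n. u j + v j - 2 * m j)"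
    using m by (intro sum_mono) (auto simp: abs_if)
  also have "\<dots> = 2 * (1 - (\<Sum>j<n. m j))"
    using u v by (simp add: prob_vec_def sum.distrib sum_subtractf sum_distrib_left[symmetric])
  finally show ?thesis .
qed

lemma le_log_diff_iff:
  assumes "0 < a" "0 < b"
  shows "L \<le> log 2 a - log 2 b \<longleftrightarrow> b \<le> 2 powr (- L) * a"
proof -
  have "L \<le> log 2 a - log 2 b \<longleftrightarrow> 2 powr L \<le> a / b"
    using assms by (simp add: le_log_iff flip: log_divide_pos)
  also have "\<dots> \<longleftrightarrow> b \<le> 2 powr (- L) * a"
    using assms by (simp add: powr_minus field_simps)
  finally show ?thesis .
qed

lemma log_diff_le_iff:
  assumes "0 < a" "0 < b"
  shows "log 2 a - log 2 b \<le> L \<longleftrightarrow> 2 powr (- L) * a \<le> b"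
proof -
  have "log 2 a - log 2 b \<le> L \<longleftrightarrow> a / b \<le> 2 powr L"
    using assms by (simp add: log_le_iff flip: log_divide_pos)
  also have "\<dots> \<longleftrightarrow> 2 powr (- L) * a \<le> b"
    using assms by (simp add: powr_minus field_simps)
  finally show ?thesis .
qed

section \<open>Cantelli's inequality\<close>

lemma expect_centered:
  assumes "prob_vec n p"
  shows "expect n p (\<lambda>i. x i - expect n p x) = 0"
  using assms by (simp add: expect_def prob_vec_def algebra_simps sum_subtractf flip: sum_distrib_right)

lemma variance_central:
  assumes "prob_vec n p"
  shows "variance n p x = expect n p (\<lambda>i. (x i - expect n p x)\<^sup>2)"
proof -
  define D where "D = expect n p x"
  have "expect n p (\<lambda>i. (x i - D)\<^sup>2) = expect n p (\<lambda>i. (x i)\<^sup>2) - 2 * D * expect n p x + D\<^sup>2 * (\<Sum>i<n. p i)"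
    by (simp add: expect_def power2_eq_square algebra_simps sum.distrib sum_subtractf sum_distrib_left)
  then show ?thesis using prob_vec_sum[OF assms] by (simp add: variance_def D_def power2_eq_square)
qed

lemma variance_nonneg: "prob_vec n p \<Longrightarrow> 0 \<le> variance n p x"
  by (auto simp: variance_central expect_def prob_vec_def intro!: sum_nonneg)

lemma expect_uminus: "expect n p (\<lambda>i. - x i) = - expect n p x"
  by (simp add: expect_def sum_negf)

lemma variance_uminus: "variance n p (\<lambda>i. - x i) = variance n p x"
  by (simp add: variance_def expect_uminus)

lemma cantelli:
  assumes p: "prob_vec n p" and t: "0 < t"
  shows "(\<Sum>i | i < n \<and> x i < expect n p x - t. p i) \<le> variance n p x / (variance n p x + t\<^sup>2)"
proof -
  define D where "D = expect n p x"
  define V where "V = variance n p x"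
  define u where "u = V / t"
  have V0: "0 \<le> V" unfolding V_def by (rule variance_nonneg[OF p])
  have u0: "0 \<le> u" unfolding u_def using V0 t by simp
  have shifted: "expect n p (\<lambda>i. (D - x i + u)\<^sup>2) = V + u\<^sup>2"
  proof -
    have "expect n p (\<lambda>i. (D - x i + u)\<^sup>2)
        = expect n p (\<lambda>i. (x i - D)\<^sup>2) - 2 * u * expect n p (\<lambda>i. x i - D) + u\<^sup>2 * (\<Sum>i<n. p i)"
      by (simp add: expect_def power2_eq_square algebra_simps sum.distrib sum_subtractf sum_distrib_left)
    then show ?thesis
      using variance_central[OF p, of x] expect_centered[OF p, of x] prob_vec_sum[OF p]
      unfolding D_def V_def by simp
  qed
  \<comment> \<open>On the tail the indicator is at most \<open>((D - x + u) / (t + u))\<^sup>2\<close>; the shift \<open>u = V / t\<close>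
    optimizes the resulting bound.\<close>
  have "(\<Sum>i | i < n \<and> x i < D - t. p i) \<le> (\<Sum>i | i < n \<and> x i < D - t. p i * ((D - x i + u) / (t + u))\<^sup>2)"
  proof (rule sum_mono)
    fix i assume "i \<in> {i. i < n \<and> x i < D - t}"
    then have i: "i < n" and "t + u \<le> D - x i + u" by auto
    then have "1 \<le> ((D - x i + u) / (t + u))\<^sup>2" using t u0 by (simp add: power_mono one_le_power)
    then show "p i \<le> p i * ((D - x i + u) / (t + u))\<^sup>2"
      using prob_vec_nonneg[OF p i] by (metis mult.right_neutral mult_left_mono)
  qed
  also have "\<dots> \<le> (\<Sum>i<n. p i * ((D - x i + u) / (t + u))\<^sup>2)"
    using p by (intro sum_mono2) (auto simp: prob_vec_def)
  also have "\<dots> = (V + u\<^sup>2) / (t + u)\<^sup>2"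
    using shifted by (simp add: expect_def power_divide flip: sum_divide_distrib)
  also have "\<dots> = V / (V + t\<^sup>2)"
  proof -
    have pos: "0 < V + t\<^sup>2" using t V0 by (simp add: add_nonneg_pos)
    have "V + u\<^sup>2 = V * (V + t\<^sup>2) / t\<^sup>2" and "(t + u)\<^sup>2 = (V + t\<^sup>2)\<^sup>2 / t\<^sup>2"
      unfolding u_def using t by (simp_all add: field_simps power2_eq_square)
    then show ?thesis using t pos by (simp add: power2_eq_square)
  qed
  finally show ?thesis unfolding D_def V_def .
qed

lemma cantelli_deviation:
  assumes p: "prob_vec n p" and e: "0 < e" "e < 1"
  shows "(\<Sum>i | i < n \<and> x i < expect n p x - sqrt (variance n p x * (2/e - 1)). p i) \<le> e / 2"
proof (cases "variance n p x = 0")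
  case True
  have "p i * (x i - expect n p x)\<^sup>2 = 0" if "i < n" for i
    using True p that unfolding variance_central[OF p]
    by (subst (asm) expect_def, subst (asm) sum_nonneg_eq_0_iff) (auto simp: prob_vec_def)
  then have "(\<Sum>i | i < n \<and> x i < expect n p x. p i) = 0" by (intro sum.neutral) force
  then show ?thesis using True e by simp
next
  case False
  then have V: "0 < variance n p x" using variance_nonneg[OF p, of x] by simp
  have c: "0 < 2/e - 1" using e by (simp add: field_simps)
  have "(\<Sum>i | i < n \<and> x i < expect n p x - sqrt (variance n p x * (2/e - 1)). p i)
      \<le> variance n p x / (variance n p x + (sqrt (variance n p x * (2/e - 1)))\<^sup>2)"
    using V c by (intro cantelli[OF p]) simp
  also have "\<dots> = e / 2" using V c e by (simp add: field_simps)
  finally show ?thesis .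
qed

lemma upper_tail_mass:
  assumes p: "prob_vec n p" and e: "0 < e" "e < 1"
  shows "1 - e/2 \<le> (\<Sum>i | i < n \<and> 0 < p i \<and> expect n p x - sqrt (variance n p x * (2/e - 1)) \<le> x i. p i)"
proof -
  let ?L = "expect n p x - sqrt (variance n p x * (2/e - 1))"
  have "(\<Sum>i | i < n \<and> 0 < p i \<and> ?L \<le> x i. p i) = (\<Sum>i | i < n \<and> ?L \<le> x i. p i)"
    by (rule prob_vec_mass_pos_part[OF p])
  also have "\<dots> = 1 - (\<Sum>i | i < n \<and> \<not> ?L \<le> x i. p i)"
    by (rule prob_vec_mass_compl[OF p])
  finally show ?thesis using cantelli_deviation[OF p e, of x] by (simp add: not_le)
qed

lemma lower_tail_mass:
  assumes p: "prob_vec n p" and e: "0 < e" "e < 1"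
  shows "1 - e/2 \<le> (\<Sum>i | i < n \<and> 0 < p i \<and> x i \<le> expect n p x + sqrt (variance n p x * (2/e - 1)). p i)"
proof -
  let ?s = "sqrt (variance n p x * (2/e - 1))"
  have "{i. i < n \<and> 0 < p i \<and> - expect n p x - ?s \<le> - x i} = {i. i < n \<and> 0 < p i \<and> x i \<le> expect n p x + ?s}"
    by auto
  then show ?thesis using upper_tail_mass[OF p e, of "\<lambda>i. - x i"] by (simp add: expect_uminus variance_uminus)
qed

section \<open>Stochastic maps\<close>

text \<open>Column-stochastic matrices: \<open>T j i\<close> is the probability of the transition \<open>i \<mapsto> j\<close>.\<close>

definition stochastic_mat :: "nat \<Rightarrow> nat \<Rightarrow> (nat \<Rightarrow> nat \<Rightarrow> real) \<Rightarrow> bool" where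
  "stochastic_mat d d' T \<longleftrightarrow> (\<forall>i<d. \<forall>j<d'. 0 \<le> T j i) \<and> (\<forall>i<d. (\<Sum>j<d'. T j i) = 1)"

definition stoch_apply :: "nat \<Rightarrow> (nat \<Rightarrow> nat \<Rightarrow> real) \<Rightarrow> (nat \<Rightarrow> real) \<Rightarrow> nat \<Rightarrow> real" where
  "stoch_apply d T p j = (\<Sum>i<d. T j i * p i)"

lemma stoch_apply_prob_vec:
  assumes T: "stochastic_mat d d' T" and p: "prob_vec d p"
  shows "prob_vec d' (stoch_apply d T p)"
proof -
  have "(\<Sum>j<d'. stoch_apply d T p j) = (\<Sum>i<d. (\<Sum>j<d'. T j i) * p i)"
    unfolding stoch_apply_def by (subst sum.swap) (simp add: sum_distrib_right)
  then show ?thesis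
    using T p by (auto simp: prob_vec_def stochastic_mat_def stoch_apply_def intro!: sum_nonneg)
qed

lemma stochastic_mat_two_valued:
  assumes "prob_vec d' \<mu>" and "prob_vec d' \<nu>"
  shows "stochastic_mat d d' (\<lambda>j i. if i \<in> A then \<mu> j else \<nu> j)"
proof -
  have "(\<Sum>j<d'. if i \<in> A then \<mu> j else \<nu> j) = 1" for i
    using assms by (cases "i \<in> A") (simp_all add: prob_vec_def)
  then show ?thesis using assms by (simp add: stochastic_mat_def prob_vec_def)
qed

lemma stoch_apply_two_valued:
  assumes A: "A \<subseteq> {..<d}" and w: "(\<Sum>i<d. w i) = 1"
  shows "stoch_apply d (\<lambda>j i. if i \<in> A then \<mu> j else \<nu> j) w j
    = (\<Sum>i\<in>A. w i) * \<mu> j + (1 - (\<Sum>i\<in>A. w i)) * \<nu> j"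
proof -
  have "stoch_apply d (\<lambda>j i. if i \<in> A then \<mu> j else \<nu> j) w j
      = (\<Sum>i<d. if i \<in> A then \<mu> j * w i else \<nu> j * w i)"
    unfolding stoch_apply_def by (intro sum.cong) auto
  also have "\<dots> = \<mu> j * (\<Sum>i\<in>A. w i) + \<nu> j * (\<Sum>i\<in>{..<d} - A. w i)"
    using A by (simp add: sum.If_cases Int_absorb1 Diff_eq sum_distrib_left)
  also have "(\<Sum>i\<in>{..<d} - A. w i) = 1 - (\<Sum>i\<in>A. w i)"
    using A w by (simp add: sum_diff)
  finally show ?thesis by (simp add: algebra_simps)
qed

text \<open>On \<open>A\<close> the map outputs \<open>p'\<close> conditioned on \<open>B\<close>, mixed with weight \<open>s / p(A)\<close>, elsewhere the
  residual of \<open>q'\<close>; the likelihood-ratio bounds on \<open>A\<close> and \<open>B\<close> make that residual nonnegative.\<close>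

lemma stochastic_map_of_tests:
  assumes p: "prob_vec d p" and q: "prob_vec d q" and p': "prob_vec d' p'" and q': "prob_vec d' q'"
    and A: "A \<subseteq> {..<d}" and B: "B \<subseteq> {..<d'}" and c: "0 < c"
    and qA: "(\<Sum>i\<in>A. q i) \<le> c * (\<Sum>i\<in>A. p i)" and pB: "\<And>j. j \<in> B \<Longrightarrow> c * p' j \<le> q' j"
    and s: "0 < s" "s \<le> (\<Sum>i\<in>A. p i)" "s \<le> (\<Sum>j\<in>B. p' j)"
  obtains T where "stochastic_mat d d' T" and "\<And>j. j < d' \<Longrightarrow> stoch_apply d T q j = q' j"
    and "(\<Sum>j<d'. \<bar>p' j - stoch_apply d T p j\<bar>) \<le> 2 * (1 - s)"
proof -
  define a where "a = (\<Sum>i\<in>A. p i)"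
  define b where "b = (\<Sum>i\<in>A. q i)"
  define \<beta> where "\<beta> = (\<Sum>j\<in>B. p' j)"
  define \<kappa> where "\<kappa> = s / a"
  define \<pi> where "\<pi> = (\<lambda>j. if j \<in> B then p' j / \<beta> else 0)"
  have a: "0 < a" "a \<le> 1" using s prob_vec_sum_subset[OF p A] unfolding a_def by auto
  have b: "0 \<le> b" "b \<le> 1" using prob_vec_sum_subset[OF q A] unfolding b_def by auto
  have \<beta>: "0 < \<beta>" "s \<le> \<beta>" using s unfolding \<beta>_def by auto
  have \<kappa>: "0 \<le> \<kappa>" "\<kappa> \<le> 1" "\<kappa> * a = s" using s a unfolding \<kappa>_def a_def by auto
  have \<pi>: "prob_vec d' \<pi>" unfolding \<pi>_def \<beta>_def by (rule prob_vec_restrict[OF p' B \<beta>(1)[unfolded \<beta>_def]])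
  have s\<pi>_le: "s * \<pi> j \<le> p' j" if "j < d'" for j
    using \<beta> prob_vec_nonneg[OF p' that] by (simp add: \<pi>_def field_simps mult_right_mono)
  have "\<kappa> * b * \<pi> j \<le> q' j" if j: "j < d'" for j
  proof (cases "j \<in> B")
    case True
    have "\<kappa> * b * \<pi> j \<le> \<kappa> * (c * a) * \<pi> j"
      using qA \<kappa> prob_vec_nonneg[OF \<pi> j] unfolding a_def b_def by (intro mult_right_mono mult_left_mono) auto
    also have "\<dots> = c * (s * \<pi> j)" using \<kappa>(3) by (simp add: algebra_simps)
    also have "\<dots> \<le> c * p' j" using s\<pi>_le[OF j] c by simp
    finally show ?thesis using pB[OF True] by simp
  next
    case False
    then show ?thesis using prob_vec_nonneg[OF q' j] by (simp add: \<pi>_def)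
  qed
  moreover have "0 \<le> \<kappa> * b" "\<kappa> * b \<le> 1" using \<kappa> b by (auto intro: mult_le_one)
  ultimately obtain \<rho> where \<rho>: "prob_vec d' \<rho>"
    and q'_mix: "\<And>j. j < d' \<Longrightarrow> q' j = \<kappa> * b * \<pi> j + (1 - \<kappa> * b) * \<rho> j"
    using prob_vec_residual[OF q' \<pi>] by blast
  define T where "T = (\<lambda>j i. if i \<in> A then \<kappa> * \<pi> j + (1 - \<kappa>) * \<rho> j else \<rho> j)"
  have "stochastic_mat d d' T"
    unfolding T_def by (intro stochastic_mat_two_valued prob_vec_mix \<pi> \<rho> \<kappa>(1,2))
  moreover have "stoch_apply d T q j = q' j" if "j < d'" for j
    using q'_mix[OF that] unfolding T_def stoch_apply_two_valued[OF A prob_vec_sum[OF q]] b_def[symmetric]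
    by (simp add: algebra_simps)
  moreover have Tp: "stoch_apply d T p j = s * \<pi> j + (1 - s) * \<rho> j" for j
    unfolding T_def stoch_apply_two_valued[OF A prob_vec_sum[OF p]] a_def[symmetric] \<kappa>(3)[symmetric]
    by (simp add: algebra_simps)
  moreover have "(\<Sum>j<d'. \<bar>p' j - stoch_apply d T p j\<bar>) \<le> 2 * (1 - (\<Sum>j<d'. s * \<pi> j))"
  proof (rule l1_dist_le_overlap[OF p'])
    show "prob_vec d' (stoch_apply d T p)"
      unfolding Tp using prob_vec_mix[OF \<pi> \<rho>] s a by (simp add: a_def)
    show "s * \<pi> j \<le> p' j \<and> s * \<pi> j \<le> stoch_apply d T p j" if "j < d'" for j
      using s\<pi>_le[OF that] prob_vec_nonneg[OF \<rho> that] s a unfolding Tp a_def by simp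
  qed
  ultimately show ?thesis
    using that prob_vec_sum[OF \<pi>] by (simp flip: sum_distrib_left)
qed

lemma stochastic_map_of_entropy_gap:
  assumes p: "prob_vec d p" and q: "prob_vec d q" and q_pos: "\<And>i. i < d \<Longrightarrow> 0 < q i"
    and p': "prob_vec d' p'" and q': "prob_vec d' q'" and q'_pos: "\<And>j. j < d' \<Longrightarrow> 0 < q' j"
    and e: "0 < e" "e < 1"
    and gap: "expect d' p' (log_ratio p' q') + sqrt (variance d' p' (log_ratio p' q') * (2/e - 1))
       \<le> expect d p (log_ratio p q) - sqrt (variance d p (log_ratio p q) * (2/e - 1))"
  obtains T where "stochastic_mat d d' T" and "\<And>j. j < d' \<Longrightarrow> stoch_apply d T q j = q' j"
    and "(\<Sum>j<d'. \<bar>p' j - stoch_apply d T p j\<bar>) \<le> e"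
proof -
  define L where "L = expect d p (log_ratio p q) - sqrt (variance d p (log_ratio p q) * (2/e - 1))"
  define L' where "L' = expect d' p' (log_ratio p' q') + sqrt (variance d' p' (log_ratio p' q') * (2/e - 1))"
  define A where "A = {i. i < d \<and> 0 < p i \<and> L \<le> log_ratio p q i}"
  define B where "B = {j. j < d' \<and> 0 < p' j \<and> log_ratio p' q' j \<le> L'}"
  have "(\<Sum>i\<in>A. q i) \<le> (\<Sum>i\<in>A. 2 powr (- L) * p i)"
    using q_pos by (intro sum_mono) (auto simp: A_def log_ratio_def le_log_diff_iff)
  then have qA: "(\<Sum>i\<in>A. q i) \<le> 2 powr (- L) * (\<Sum>i\<in>A. p i)"
    by (simp add: sum_distrib_left)
  have pB: "2 powr (- L) * p' j \<le> q' j" if "j \<in> B" for j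
  proof -
    have "2 powr (- L) * p' j \<le> 2 powr (- L') * p' j"
      using gap that by (intro mult_right_mono) (auto simp: B_def L_def L'_def)
    also have "\<dots> \<le> q' j" using that q'_pos by (auto simp: B_def log_ratio_def log_diff_le_iff)
    finally show ?thesis .
  qed
  have mA: "1 - e/2 \<le> (\<Sum>i\<in>A. p i)" unfolding A_def L_def by (rule upper_tail_mass[OF p e])
  have mB: "1 - e/2 \<le> (\<Sum>j\<in>B. p' j)" unfolding B_def L'_def by (rule lower_tail_mass[OF p' e])
  have "A \<subseteq> {..<d}" "B \<subseteq> {..<d'}" "0 < 1 - e/2" unfolding A_def B_def using e by auto
  then obtain T where T: "stochastic_mat d d' T" "\<And>j. j < d' \<Longrightarrow> stoch_apply d T q j = q' j"
    and "(\<Sum>j<d'. \<bar>p' j - stoch_apply d T p j\<bar>) \<le> 2 * (1 - (1 - e/2))"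
    using stochastic_map_of_tests[OF p q p' q' _ _ _ qA pB _ mA mB] by auto
  then show ?thesis using that[OF T] by simp
qed

lemma mult_carrier_mat_square [simp]:
  "A \<in> carrier_mat n n \<Longrightarrow> B \<in> carrier_mat n n \<Longrightarrow> A * B \<in> carrier_mat n n"
  by auto

lemma index_mult_mat_sum:
  assumes "A \<in> carrier_mat n m" "B \<in> carrier_mat m p" "i < n" "j < p"
  shows "(A * B) $$ (i,j) = (\<Sum>k<m. A $$ (i,k) * B $$ (k,j))"
  using assms by (simp add: scalar_prod_def atLeast0LessThan)

lemma index_mult_mat3_sum:
  assumes A: "A \<in> carrier_mat n1 n2" and X: "X \<in> carrier_mat n2 n3" and C: "C \<in> carrier_mat n3 n4"
    and i: "i < n1" and j: "j < n4"
  shows "(A * X * C) $$ (i,j) = (\<Sum>k<n2. \<Sum>l<n3. A $$ (i,k) * X $$ (k,l) * C $$ (l,j))"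
proof -
  have AX: "A * X \<in> carrier_mat n1 n3" using A X by simp
  have "(A * X * C) $$ (i,j) = (\<Sum>l<n3. (A * X) $$ (i,l) * C $$ (l,j))"
    by (rule index_mult_mat_sum[OF AX C i j])
  also have "\<dots> = (\<Sum>l<n3. \<Sum>k<n2. A $$ (i,k) * X $$ (k,l) * C $$ (l,j))"
    by (intro sum.cong refl) (simp add: index_mult_mat_sum[OF A X i] sum_distrib_right)
  finally show ?thesis by (simp add: sum.swap[of _ "{..<n3}"])
qed

lemma quadratic_form_sum:
  assumes "A \<in> carrier_mat n n" and "v \<in> carrier_vec n"
  shows "map_vec cnj v \<bullet> (A *\<^sub>v v) = (\<Sum>a<n. \<Sum>b<n. cnj (v $ a) * A $$ (a,b) * v $ b)"
  using assms by (simp add: scalar_prod_def atLeast0LessThan sum_distrib_left mult.assoc)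

lemma cnj_mult_self: "cnj z * z = complex_of_real ((cmod z)\<^sup>2)"
  using complex_norm_square[of z] by (simp add: mult.commute)

lemma cadj_carrier_mat [simp]: "A \<in> carrier_mat n m \<Longrightarrow> cadj A \<in> carrier_mat m n"
  by (simp add: cadj_def)

lemma cadj_dim [simp]: "dim_row (cadj A) = dim_col A" "dim_col (cadj A) = dim_row A"
  by (simp_all add: cadj_def)

lemma index_cadj [simp]: "i < dim_col A \<Longrightarrow> j < dim_row A \<Longrightarrow> cadj A $$ (i,j) = cnj (A $$ (j,i))"
  by (simp add: cadj_def)

lemma cadj_cadj [simp]: "cadj (cadj A) = A"
  by (rule eq_matI) (auto simp: cadj_def)

lemma cadj_mult_mat:
  assumes A: "A \<in> carrier_mat n m" and B: "B \<in> carrier_mat m p"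
  shows "cadj (A * B) = cadj B * cadj A"
proof (rule eq_matI)
  fix i j assume "i < dim_row (cadj B * cadj A)" "j < dim_col (cadj B * cadj A)"
  then have i: "i < p" and j: "j < n" using A B by auto
  show "cadj (A * B) $$ (i,j) = (cadj B * cadj A) $$ (i,j)"
    using A B i j by (simp add: index_mult_mat_sum[OF A B j i]
        index_mult_mat_sum[OF cadj_carrier_mat[OF B] cadj_carrier_mat[OF A] i j] mult.commute)
qed (use A B in auto)

lemma hermitian_mat_index:
  assumes "hermitian_mat n A" "i < n" "j < n"
  shows "cnj (A $$ (j,i)) = A $$ (i,j)"
  using assms index_cadj[of i A j] unfolding hermitian_mat_def by auto

lemma mtrace_mult_comm:
  assumes A: "A \<in> carrier_mat n m" and B: "B \<in> carrier_mat m n"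
  shows "mtrace (A * B) = mtrace (B * A)"
proof -
  have "mtrace (A * B) = (\<Sum>i<n. \<Sum>k<m. A $$ (i,k) * B $$ (k,i))"
    unfolding mtrace_def using A B
    by (simp del: index_mult_mat add: index_mult_mat(2,3) index_mult_mat_sum[OF A B])
  also have "\<dots> = (\<Sum>k<m. \<Sum>i<n. B $$ (k,i) * A $$ (i,k))"
    by (subst sum.swap) (simp add: mult.commute)
  also have "\<dots> = mtrace (B * A)"
    unfolding mtrace_def using A B
    by (simp del: index_mult_mat add: index_mult_mat(2,3) index_mult_mat_sum[OF B A])
  finally show ?thesis .
qed

lemma unitary_mat_carrier: "unitary_mat n U \<Longrightarrow> U \<in> carrier_mat n n"
  by (simp add: unitary_mat_def)

lemma unitary_mat_cadj_mult: "unitary_mat n U \<Longrightarrow> cadj U * U = 1\<^sub>m n"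
  by (simp add: unitary_mat_def)

lemma unitary_mat_mult_cadj: "unitary_mat n U \<Longrightarrow> U * cadj U = 1\<^sub>m n"
  using mat_mult_left_right_inverse[of "cadj U" n U] by (simp add: unitary_mat_def)

lemma unitary_mat_cancel_left:
  assumes U: "unitary_mat n U" and Z: "Z \<in> carrier_mat n k"
  shows "cadj U * (U * Z) = Z" and "U * (cadj U * Z) = Z"
  using U Z unitary_mat_carrier[OF U] unitary_mat_cadj_mult[OF U] unitary_mat_mult_cadj[OF U]
  by (simp_all flip: assoc_mult_mat[of _ n n _ n _ k])

lemma unitary_mat_cancel_right:
  assumes U: "unitary_mat n U" and Z: "Z \<in> carrier_mat k n"
  shows "Z * cadj U * U = Z" and "Z * U * cadj U = Z"
  using U Z unitary_mat_carrier[OF U] unitary_mat_cadj_mult[OF U] unitary_mat_mult_cadj[OF U]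
  by (simp_all add: assoc_mult_mat[of _ k n _ n _ n])

lemma unitary_mat_mult:
  assumes U: "unitary_mat n U" and V: "unitary_mat n V"
  shows "unitary_mat n (U * V)"
proof -
  have Uc: "U \<in> carrier_mat n n" and Vc: "V \<in> carrier_mat n n"
    using U V by (simp_all add: unitary_mat_carrier)
  have "cadj (U * V) * (U * V) = cadj V * (cadj U * (U * V))"
    using Uc Vc by (simp add: cadj_mult_mat[OF Uc Vc] assoc_mult_mat[of _ n n _ n _ n])
  also have "\<dots> = 1\<^sub>m n"
    using unitary_mat_cancel_left(1)[OF U Vc] unitary_mat_cadj_mult[OF V] by simp
  finally show ?thesis unfolding unitary_mat_def using Uc Vc by simp
qed

lemma unitary_conj_mult:
  assumes U: "unitary_mat n U" and X: "X \<in> carrier_mat n n" and Y: "Y \<in> carrier_mat n n"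
  shows "(U * X * cadj U) * (U * Y * cadj U) = U * (X * Y) * cadj U"
proof -
  have Uc: "U \<in> carrier_mat n n" using U by (rule unitary_mat_carrier)
  have "(U * X * cadj U) * (U * Y * cadj U) = U * (X * (cadj U * (U * (Y * cadj U))))"
    using Uc X Y by (simp add: assoc_mult_mat[of _ n n _ n _ n])
  also have "\<dots> = U * (X * Y) * cadj U"
    using Uc X Y by (simp add: unitary_mat_cancel_left(1)[OF U, of "Y * cadj U" n]
        assoc_mult_mat[of _ n n _ n _ n])
  finally show ?thesis .
qed

lemma unitary_conj_minus:
  assumes U: "U \<in> carrier_mat n n" and X: "X \<in> carrier_mat n n" and Y: "Y \<in> carrier_mat n n"
  shows "U * X * cadj U - U * Y * cadj U = U * (X - Y) * cadj U"
proof -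
  have "U * X * cadj U - U * Y * cadj U = (U * X - U * Y) * cadj U"
    by (rule minus_mult_distrib_mat[symmetric, of _ n n]) (use U X Y in auto)
  also have "U * X - U * Y = U * (X - Y)"
    by (rule mult_minus_distrib_mat[symmetric, of _ n n]) (use U X Y in auto)
  finally show ?thesis .
qed

lemma cadj_unitary_conj:
  assumes U: "U \<in> carrier_mat n n" and X: "X \<in> carrier_mat n n"
  shows "cadj (U * X * cadj U) = U * cadj X * cadj U"
  using U X by (simp add: cadj_mult_mat[of _ n n _ n] assoc_mult_mat[of _ n n _ n _ n])

lemma mtrace_unitary_conj:
  assumes U: "unitary_mat n U" and X: "X \<in> carrier_mat n n"
  shows "mtrace (U * X * cadj U) = mtrace X"
proof -
  have Uc: "U \<in> carrier_mat n n" using U by (rule unitary_mat_carrier)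
  have "mtrace (U * X * cadj U) = mtrace (cadj U * (U * X))"
    using Uc X by (simp add: mtrace_mult_comm[of _ n n])
  then show ?thesis using unitary_mat_cancel_left(1)[OF U X] by simp
qed

lemma unitary_unconj:
  assumes U: "unitary_mat n U" and X: "X \<in> carrier_mat n n"
  shows "cadj U * (U * X * cadj U) * U = X"
proof -
  have Uc: "U \<in> carrier_mat n n" using U by (rule unitary_mat_carrier)
  have "cadj U * (U * X * cadj U) * U = cadj U * (U * (X * cadj U * U))"
    using Uc X by (simp add: assoc_mult_mat[of _ n n _ n _ n])
  then show ?thesis using unitary_mat_cancel_left(1)[OF U] unitary_mat_cancel_right(1)[OF U X] X Uc
    by simp
qed

lemma real_diag_carrier_mat [simp]: "real_diag n f \<in> carrier_mat n n"
  by (simp add: real_diag_def)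

lemma real_diag_dim [simp]: "dim_row (real_diag n f) = n" "dim_col (real_diag n f) = n"
  by (simp_all add: real_diag_def)

lemma index_real_diag [simp]:
  "i < n \<Longrightarrow> j < n \<Longrightarrow> real_diag n f $$ (i,j) = (if i = j then complex_of_real (f i) else 0)"
  by (simp add: real_diag_def)

lemma real_diag_cong: "(\<And>j. j < n \<Longrightarrow> f j = g j) \<Longrightarrow> real_diag n f = real_diag n g"
  by (rule eq_matI) auto

lemma real_diag_mult_left_index:
  assumes M: "M \<in> carrier_mat n k" and i: "i < n" and j: "j < k"
  shows "(real_diag n f * M) $$ (i,j) = complex_of_real (f i) * M $$ (i,j)"
proof -
  have "(real_diag n f * M) $$ (i,j) = (\<Sum>l\<in>{i}. real_diag n f $$ (i,l) * M $$ (l,j))"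
    unfolding index_mult_mat_sum[OF real_diag_carrier_mat M i j]
    by (rule sum.mono_neutral_right) (use i in auto)
  then show ?thesis using i by simp
qed

lemma real_diag_mult_right_index:
  assumes M: "M \<in> carrier_mat k n" and i: "i < k" and j: "j < n"
  shows "(M * real_diag n f) $$ (i,j) = M $$ (i,j) * complex_of_real (f j)"
proof -
  have "(M * real_diag n f) $$ (i,j) = (\<Sum>l\<in>{j}. M $$ (i,l) * real_diag n f $$ (l,j))"
    unfolding index_mult_mat_sum[OF M real_diag_carrier_mat i j]
    by (rule sum.mono_neutral_right) (use j in auto)
  then show ?thesis using j by simp
qed

lemma real_diag_mult: "real_diag n f * real_diag n g = real_diag n (\<lambda>i. f i * g i)"
  by (rule eq_matI) (simp_all del: index_mult_mat add: index_mult_mat(2,3) real_diag_mult_left_index[OF real_diag_carrier_mat])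

lemma real_diag_minus: "real_diag n f - real_diag n g = real_diag n (\<lambda>i. f i - g i)"
  by (rule eq_matI) auto

lemma cadj_real_diag [simp]: "cadj (real_diag n f) = real_diag n f"
  by (rule eq_matI) auto

lemma mtrace_real_diag: "mtrace (real_diag n f) = complex_of_real (\<Sum>i<n. f i)"
  unfolding mtrace_def by simp

lemma unitary_mat_cadj: "unitary_mat n U \<Longrightarrow> unitary_mat n (cadj U)"
  using unitary_mat_mult_cadj[of n U] unitary_mat_carrier[of n U] by (simp add: unitary_mat_def)

lemma index_conj_mat_diag:
  assumes W: "W \<in> carrier_mat n n" and a: "a < n" and b: "b < n"
  shows "(W * mat_diag n f * cadj W) $$ (a,b) = (\<Sum>j<n. W $$ (a,j) * f j * cnj (W $$ (b,j)))"
proof -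
  have "(W * mat_diag n f * cadj W) $$ (a,b)
      = (\<Sum>k<n. \<Sum>l\<in>{k}. W $$ (a,k) * mat_diag n f $$ (k,l) * cadj W $$ (l,b))"
    unfolding index_mult_mat3_sum[OF W mat_diag_dim cadj_carrier_mat[OF W] a b]
    by (intro sum.cong refl sum.mono_neutral_right) (auto simp: mat_diag_def)
  then show ?thesis using W a b by (simp add: mat_diag_def)
qed

section \<open>Functional calculus\<close>

lemma real_diag_intertwining_fun:
  assumes M: "M \<in> carrier_mat n n"
    and C: "real_diag n \<mu> * M = M * real_diag n \<nu>"
  shows "real_diag n (\<lambda>i. f (\<mu> i)) * M = M * real_diag n (\<lambda>i. f (\<nu> i))"
proof (rule eq_matI)
  fix i j assume "i < dim_row (M * real_diag n (\<lambda>i. f (\<nu> i)))" "j < dim_col (M * real_diag n (\<lambda>i. f (\<nu> i)))"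
  then have i: "i < n" and j: "j < n" using M by auto
  note idx = real_diag_mult_left_index[OF M i j] real_diag_mult_right_index[OF M i j]
  have "complex_of_real (\<mu> i) * M $$ (i,j) = M $$ (i,j) * complex_of_real (\<nu> j)"
    using arg_cong[OF C, of "\<lambda>X. X $$ (i,j)"] idx by simp
  then have "M $$ (i,j) = 0 \<or> \<mu> i = \<nu> j" by (auto simp: mult.commute)
  then show "(real_diag n (\<lambda>i. f (\<mu> i)) * M) $$ (i,j) = (M * real_diag n (\<lambda>i. f (\<nu> i))) $$ (i,j)"
    using idx by (auto simp: mult.commute)
qed (use M in auto)

text \<open>Two spectral decompositions are related by \<open>W\<^sup>* U\<close>, which intertwines their diagonal parts.\<close>

lemma mat_fun_unitary_diag:
  assumes U: "unitary_mat n U" and A: "A = U * real_diag n \<nu> * cadj U"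
  shows "mat_fun f A = U * real_diag n (\<lambda>i. f (\<nu> i)) * cadj U"
proof -
  have Uc: "U \<in> carrier_mat n n" using U by (rule unitary_mat_carrier)
  have dA: "dim_row A = n" using A Uc by simp
  define P where "P = (\<lambda>B. \<exists>W \<mu>. unitary_mat n W \<and> A = W * real_diag n \<mu> * cadj W \<and>
       B = W * real_diag n (\<lambda>i. f (\<mu> i)) * cadj W)"
  have "P (U * real_diag n (\<lambda>i. f (\<nu> i)) * cadj U)"
    unfolding P_def using U A by blast
  then have "P (mat_fun f A)"
    unfolding mat_fun_def dA P_def[symmetric] by (rule someI)
  then obtain W \<mu> where W: "unitary_mat n W" and AW: "A = W * real_diag n \<mu> * cadj W"
    and B: "mat_fun f A = W * real_diag n (\<lambda>i. f (\<mu> i)) * cadj W"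
    unfolding P_def by blast
  have Wc: "W \<in> carrier_mat n n" using W by (rule unitary_mat_carrier)
  define M where "M = cadj W * U"
  have Mc: "M \<in> carrier_mat n n" unfolding M_def using Uc Wc by simp
  have "real_diag n \<mu> * M = cadj W * A * U"
    unfolding AW M_def using Wc Uc
    by (simp add: assoc_mult_mat[of _ n n _ n _ n] unitary_mat_cancel_left(1)[OF W, of _ n])
  also have "\<dots> = M * real_diag n \<nu>"
    unfolding A M_def using Wc Uc unitary_mat_cadj_mult[OF U]
    by (simp add: assoc_mult_mat[of _ n n _ n _ n])
  finally have "real_diag n (\<lambda>i. f (\<mu> i)) * M = M * real_diag n (\<lambda>i. f (\<nu> i))"
    by (rule real_diag_intertwining_fun[OF Mc])
  then have "W * (real_diag n (\<lambda>i. f (\<mu> i)) * M) * cadj U = W * (M * real_diag n (\<lambda>i. f (\<nu> i))) * cadj U"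
    by simp
  then show ?thesis
    unfolding B M_def using Wc Uc unitary_mat_mult_cadj[OF U]
    by (simp add: assoc_mult_mat[of _ n n _ n _ n] unitary_mat_cancel_left(2)[OF W, of _ n])
qed

section \<open>Unitary triangularization and simultaneous diagonalization\<close>

lemma unitary_mat_first_col:
  assumes v: "v \<in> carrier_vec n" and n: "0 < n" and v0: "v \<noteq> 0\<^sub>v n"
  shows "\<exists>W c. unitary_mat n W \<and> (\<forall>i<n. W $$ (i,0) = c * v $ i)"
proof -
  interpret cof_vec_space n "TYPE(complex)" .
  define b where "b = basis_completion v"
  from basis_completion[OF v v0, folded b_def]
  have dist_b: "distinct b" and indep: "\<not> lin_dep (set b)" and bc: "set b \<subseteq> carrier_vec n"
    and hdb: "hd b = v" and len_b: "length b = n" by auto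
  from hdb len_b n obtain vs where bv: "b = v # vs" by (cases b, auto)
  define ws where "ws = gram_schmidt n b"
  from gram_schmidt_result[OF bc dist_b indep refl, folded ws_def]
  have orth: "corthogonal ws" and wsc: "set ws \<subseteq> carrier_vec n" and len: "length ws = n"
    by (auto simp: len_b)
  have ws0: "ws ! 0 = v"
    using gram_schmidt_hd[OF v, of vs] len n unfolding ws_def bv by (cases "gram_schmidt n (v # vs)") auto
  have wsi: "ws ! i \<in> carrier_vec n" if "i < n" for i using wsc len that by auto
  have norm2: "ws ! j \<bullet>c ws ! j = complex_of_real (Re (ws ! j \<bullet>c ws ! j)) \<and> 0 < Re (ws ! j \<bullet>c ws ! j)"
    if j: "j < n" for j
  proof -
    have "ws ! j \<bullet>c ws ! j \<noteq> 0" using corthogonalD[OF orth, of j j] j len by auto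
    then have "ws ! j \<noteq> 0\<^sub>v n" using wsi[OF j] by auto
    then have "ws ! j \<bullet>c ws ! j > 0" using conjugate_square_greater_0_vec[OF wsi[OF j]] by simp
    then show ?thesis by (simp add: less_complex_def complex_eq_iff)
  qed
  define c where "c = (\<lambda>j. 1 / sqrt (Re (ws ! j \<bullet>c ws ! j)))"
  define W where "W = mat n n (\<lambda>(i,j). complex_of_real (c j) * ws ! j $ i)"
  have Wc: "W \<in> carrier_mat n n" unfolding W_def by simp
  have "cadj W * W = 1\<^sub>m n"
  proof (rule eq_matI)
    fix i j assume "i < dim_row (1\<^sub>m n :: complex mat)" "j < dim_col (1\<^sub>m n :: complex mat)"
    then have i: "i < n" and j: "j < n" by auto
    have "(cadj W * W) $$ (i,j) = (\<Sum>k<n. cnj (W $$ (k,i)) * W $$ (k,j))"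
      using index_mult_mat_sum[OF cadj_carrier_mat[OF Wc] Wc i j] Wc i j by simp
    also have "\<dots> = complex_of_real (c i) * complex_of_real (c j) * (ws ! j \<bullet>c ws ! i)"
      unfolding W_def using i j wsi[OF i] wsi[OF j]
      by (simp add: scalar_prod_def atLeast0LessThan sum_distrib_left algebra_simps)
    also have "\<dots> = 1\<^sub>m n $$ (i,j)"
    proof (cases "i = j")
      case True
      have "complex_of_real (c j) * complex_of_real (c j) * complex_of_real (Re (ws ! j \<bullet>c ws ! j)) = 1"
        unfolding c_def using norm2[OF j, THEN conjunct2] by (simp flip: of_real_mult)
      then show ?thesis using True i norm2[OF j] by simp
    next
      case False
      then show ?thesis using corthogonalD[OF orth, of j i] i j len by simp
    qed
    finally show "(cadj W * W) $$ (i,j) = 1\<^sub>m n $$ (i,j)" .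
  qed (use Wc in auto)
  then have "unitary_mat n W" unfolding unitary_mat_def using Wc by simp
  moreover have "\<forall>i<n. W $$ (i,0) = complex_of_real (c 0) * v $ i" unfolding W_def using n ws0 by simp
  ultimately show ?thesis by blast
qed

text \<open>The first column of \<open>W\<close> is an eigenvector of \<open>A\<close>.\<close>

lemma unitary_deflation:
  assumes A: "A \<in> carrier_mat (Suc m) (Suc m)"
  obtains W e where "unitary_mat (Suc m) W"
    and "\<And>k. k < Suc m \<Longrightarrow> (cadj W * A * W) $$ (k,0) = (if k = 0 then e else 0)"
proof -
  obtain e where "eigenvalue A e" using spectrum_non_empty[OF A] by (auto simp: spectrum_def)
  then obtain v where v: "v \<in> carrier_vec (Suc m)" and v0: "v \<noteq> 0\<^sub>v (Suc m)" and Av: "A *\<^sub>v v = e \<cdot>\<^sub>v v"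
    unfolding eigenvalue_def eigenvector_def using A by auto
  obtain W c where W: "unitary_mat (Suc m) W" and Wv: "\<forall>i<Suc m. W $$ (i,0) = c * v $ i"
    using unitary_mat_first_col[OF v _ v0] by auto
  have Wc: "W \<in> carrier_mat (Suc m) (Suc m)" using W by (rule unitary_mat_carrier)
  have AW: "(\<Sum>b<Suc m. A $$ (a,b) * W $$ (b,0)) = e * W $$ (a,0)" if a: "a < Suc m" for a
  proof -
    have "(\<Sum>b<Suc m. A $$ (a,b) * v $ b) = e * v $ a"
      using arg_cong[OF Av, of "\<lambda>w. w $ a"] A v a by (simp add: scalar_prod_def atLeast0LessThan)
    then show ?thesis
      using Wv a by (simp del: sum.lessThan_Suc add: sum_distrib_left[symmetric] algebra_simps)
  qed
  have "(cadj W * A * W) $$ (k,0) = (if k = 0 then e else 0)" if k: "k < Suc m" for k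
  proof -
    have "(cadj W * A * W) $$ (k,0) = (\<Sum>a<Suc m. cadj W $$ (k,a) * (e * W $$ (a,0)))"
      unfolding index_mult_mat3_sum[OF cadj_carrier_mat[OF Wc] A Wc k zero_less_Suc]
      by (intro sum.cong refl) (simp del: sum.lessThan_Suc add: AW mult.assoc sum_distrib_left[symmetric])
    also have "\<dots> = e * (cadj W * W) $$ (k,0)"
      by (simp add: index_mult_mat_sum[OF cadj_carrier_mat[OF Wc] Wc k] sum_distrib_left algebra_simps)
    finally show ?thesis using unitary_mat_cadj_mult[OF W] k by simp
  qed
  then show ?thesis using W that by blast
qed

definition one_dsum_mat :: "nat \<Rightarrow> complex mat \<Rightarrow> complex mat" where
  "one_dsum_mat m B = mat (Suc m) (Suc m)
     (\<lambda>(i,j). if i = 0 \<and> j = 0 then 1 else if i = 0 \<or> j = 0 then 0 else B $$ (i - 1, j - 1))"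

lemma one_dsum_mat_carrier [simp]: "one_dsum_mat m B \<in> carrier_mat (Suc m) (Suc m)"
  by (simp add: one_dsum_mat_def)

lemma one_dsum_mat_dim [simp]: "dim_row (one_dsum_mat m B) = Suc m" "dim_col (one_dsum_mat m B) = Suc m"
  by (simp_all add: one_dsum_mat_def)

lemma index_one_dsum_mat [simp]:
  "one_dsum_mat m B $$ (0,0) = 1"
  "j < m \<Longrightarrow> one_dsum_mat m B $$ (0, Suc j) = 0"
  "i < m \<Longrightarrow> one_dsum_mat m B $$ (Suc i, 0) = 0"
  "i < m \<Longrightarrow> j < m \<Longrightarrow> one_dsum_mat m B $$ (Suc i, Suc j) = B $$ (i,j)"
  by (simp_all add: one_dsum_mat_def)

lemma sum_lessThan_Suc_first_zero:
  fixes f :: "nat \<Rightarrow> 'a::comm_monoid_add"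
  shows "f 0 = 0 \<Longrightarrow> (\<Sum>k<Suc m. f k) = (\<Sum>k<m. f (Suc k))"
  by (simp del: sum.lessThan_Suc add: sum.lessThan_Suc_shift)

lemma unitary_one_dsum_mat:
  assumes B: "unitary_mat m B"
  shows "unitary_mat (Suc m) (one_dsum_mat m B)"
proof -
  have Bc: "B \<in> carrier_mat m m" using B by (rule unitary_mat_carrier)
  let ?E = "one_dsum_mat m B"
  have "cadj ?E * ?E = 1\<^sub>m (Suc m)"
  proof (rule eq_matI)
    fix i j assume "i < dim_row (1\<^sub>m (Suc m) :: complex mat)" "j < dim_col (1\<^sub>m (Suc m) :: complex mat)"
    then have i: "i < Suc m" and j: "j < Suc m" by auto
    have e: "(cadj ?E * ?E) $$ (i,j) = (\<Sum>k<Suc m. cnj (?E $$ (k,i)) * ?E $$ (k,j))"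
      using index_mult_mat_sum[OF cadj_carrier_mat[OF one_dsum_mat_carrier] one_dsum_mat_carrier i j] i j
      by (simp del: sum.lessThan_Suc)
    show "(cadj ?E * ?E) $$ (i,j) = 1\<^sub>m (Suc m) $$ (i,j)"
    proof (cases "i = 0 \<or> j = 0")
      case True
      then show ?thesis using e i j
        by (cases i; cases j) (simp_all del: sum.lessThan_Suc add: sum.lessThan_Suc_shift)
    next
      case False
      then obtain i' j' where ij: "i = Suc i'" "j = Suc j'" and i': "i' < m" and j': "j' < m"
        using i j by (cases i; cases j) auto
      have "(cadj ?E * ?E) $$ (i,j) = (cadj B * B) $$ (i', j')"
        using e ij i' j' Bc
        by (simp del: sum.lessThan_Suc add: sum_lessThan_Suc_first_zero index_mult_mat_sum[OF cadj_carrier_mat[OF Bc] Bc i' j'])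
      then show ?thesis using unitary_mat_cadj_mult[OF B] ij i' j' by simp
    qed
  qed auto
  then show ?thesis unfolding unitary_mat_def by simp
qed

lemma upper_triangular_one_dsum_conj:
  assumes A: "A \<in> carrier_mat (Suc m) (Suc m)"
    and col0: "\<And>k. 0 < k \<Longrightarrow> k < Suc m \<Longrightarrow> A $$ (k,0) = 0"
    and U: "U \<in> carrier_mat m m"
    and T: "upper_triangular (cadj U * mat m m (\<lambda>(i,j). A $$ (Suc i, Suc j)) * U)"
  shows "upper_triangular (cadj (one_dsum_mat m U) * A * one_dsum_mat m U)"
  unfolding upper_triangular_def
proof (intro allI impI)
  let ?V = "one_dsum_mat m U" and ?A3 = "mat m m (\<lambda>(i,j). A $$ (Suc i, Suc j))"
  fix i j assume "i < dim_row (cadj ?V * A * ?V)" and ji: "j < i"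
  then obtain i' where i': "i = Suc i'" "i' < m" by (cases i) auto
  have e: "(cadj ?V * A * ?V) $$ (i,j) = (\<Sum>k<Suc m. \<Sum>l<Suc m. cnj (?V $$ (k,i)) * A $$ (k,l) * ?V $$ (l,j))"
    using index_mult_mat3_sum[OF cadj_carrier_mat[OF one_dsum_mat_carrier] A one_dsum_mat_carrier, of i j]
      ji i' by (simp del: sum.lessThan_Suc)
  show "(cadj ?V * A * ?V) $$ (i,j) = 0"
  proof (cases j)
    case 0
    then show ?thesis using e i' col0 by (simp del: sum.lessThan_Suc add: sum.lessThan_Suc_shift)
  next
    case (Suc j')
    then have j': "j' < m" "j' < i'" using ji i' by auto
    have "(cadj ?V * A * ?V) $$ (i,j) = (\<Sum>l<m. \<Sum>k<m. cnj (U $$ (l,i')) * ?A3 $$ (l,k) * U $$ (k,j'))"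
      using e i' j' Suc by (simp del: sum.lessThan_Suc add: sum.lessThan_Suc_shift)
    also have "\<dots> = (cadj U * ?A3 * U) $$ (i', j')"
      using index_mult_mat3_sum[OF cadj_carrier_mat[OF U] _ U i'(2) j'(1), of ?A3] i' j' U by simp
    also have "\<dots> = 0" using T j' i' U unfolding upper_triangular_def by simp
    finally show ?thesis .
  qed
qed

lemma unitary_schur:
  assumes "A \<in> carrier_mat n n"
  shows "\<exists>U. unitary_mat n U \<and> upper_triangular (cadj U * A * U)"
  using assms
proof (induction n arbitrary: A)
  case 0
  have "unitary_mat 0 (1\<^sub>m 0)" unfolding unitary_mat_def by (auto intro!: eq_matI)
  then show ?case unfolding upper_triangular_def by auto
next
  case (Suc m)
  have A: "A \<in> carrier_mat (Suc m) (Suc m)" by fact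
  obtain W e where W: "unitary_mat (Suc m) W"
    and col0: "\<And>k. k < Suc m \<Longrightarrow> (cadj W * A * W) $$ (k,0) = (if k = 0 then e else 0)"
    using unitary_deflation[OF A] by blast
  have Wc: "W \<in> carrier_mat (Suc m) (Suc m)" using W by (rule unitary_mat_carrier)
  define A' where "A' = cadj W * A * W"
  have A'c: "A' \<in> carrier_mat (Suc m) (Suc m)" unfolding A'_def using A Wc by simp
  obtain U' where U': "unitary_mat m U'"
    and T': "upper_triangular (cadj U' * mat m m (\<lambda>(i,j). A' $$ (Suc i, Suc j)) * U')"
    using Suc.IH[of "mat m m (\<lambda>(i,j). A' $$ (Suc i, Suc j))"] by auto
  have "upper_triangular (cadj (one_dsum_mat m U') * A' * one_dsum_mat m U')"
    using upper_triangular_one_dsum_conj[OF A'c _ unitary_mat_carrier[OF U'] T'] col0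
    unfolding A'_def by simp
  moreover have "cadj (W * one_dsum_mat m U') * A * (W * one_dsum_mat m U')
      = cadj (one_dsum_mat m U') * A' * one_dsum_mat m U'"
    unfolding A'_def using Wc A
    by (simp add: cadj_mult_mat[OF Wc one_dsum_mat_carrier] assoc_mult_mat[of _ "Suc m" "Suc m" _ "Suc m" _ "Suc m"])
  ultimately show ?case using unitary_mat_mult[OF W unitary_one_dsum_mat[OF U']] by metis
qed

lemma normal_mat_col_row_norm:
  assumes T: "T \<in> carrier_mat n n" and normal: "cadj T * T = T * cadj T" and k: "k < n"
  shows "(\<Sum>l<n. (cmod (T $$ (l,k)))\<^sup>2) = (\<Sum>l<n. (cmod (T $$ (k,l)))\<^sup>2)"
proof -
  have "(cadj T * T) $$ (k,k) = (\<Sum>l<n. complex_of_real ((cmod (T $$ (l,k)))\<^sup>2))"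
    using index_mult_mat_sum[OF cadj_carrier_mat[OF T] T k k] T k by (simp add: cnj_mult_self)
  moreover have "(T * cadj T) $$ (k,k) = (\<Sum>l<n. complex_of_real ((cmod (T $$ (k,l)))\<^sup>2))"
    using index_mult_mat_sum[OF T cadj_carrier_mat[OF T] k k] T k
    by (simp del: of_real_power add: complex_norm_square)
  ultimately show ?thesis using normal by (simp del: of_real_power flip: of_real_sum)
qed

lemma normal_upper_triangular_diagonal:
  assumes T: "T \<in> carrier_mat n n" and ut: "upper_triangular T" and normal: "cadj T * T = T * cadj T"
  shows "diagonal_mat T"
proof -
  have "\<forall>j<n. j \<noteq> k \<longrightarrow> T $$ (k,j) = 0" if "k < n" for k
    using that
  proof (induction k rule: less_induct)
    case (less k)
    have kn: "k \<in> {..<n}" using less.prems by simp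
    have "(\<Sum>l\<in>{..<n}-{k}. (cmod (T $$ (l,k)))\<^sup>2) = 0"
    proof (rule sum.neutral, intro ballI)
      fix l assume l: "l \<in> {..<n}-{k}"
      show "(cmod (T $$ (l,k)))\<^sup>2 = 0"
      proof (cases "l < k")
        case True
        then show ?thesis using less.IH[of l] less.prems l by auto
      next
        case False
        then show ?thesis using ut T l unfolding upper_triangular_def by auto
      qed
    qed
    then have "(\<Sum>l\<in>{..<n}-{k}. (cmod (T $$ (k,l)))\<^sup>2) = 0"
      using normal_mat_col_row_norm[OF T normal less.prems]
        sum.remove[OF finite_lessThan kn, of "\<lambda>l. (cmod (T $$ (l,k)))\<^sup>2"]
        sum.remove[OF finite_lessThan kn, of "\<lambda>l. (cmod (T $$ (k,l)))\<^sup>2"] by simp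
    then show ?case by (subst (asm) sum_nonneg_eq_0_iff) auto
  qed
  then show ?thesis unfolding diagonal_mat_def using T by auto
qed

lemma normal_unitary_conj:
  assumes U: "unitary_mat n U" and N: "N \<in> carrier_mat n n" and normal: "cadj N * N = N * cadj N"
  shows "cadj (cadj U * N * U) * (cadj U * N * U) = (cadj U * N * U) * cadj (cadj U * N * U)"
proof -
  have Uc: "U \<in> carrier_mat n n" using U by (rule unitary_mat_carrier)
  have adj: "cadj (cadj U * N * U) = cadj U * cadj N * U"
    using Uc N by (simp add: cadj_mult_mat[of _ n n _ n] assoc_mult_mat[of _ n n _ n _ n])
  have "cadj (cadj U * N * U) * (cadj U * N * U) = cadj U * (cadj N * N) * U"
    and "(cadj U * N * U) * cadj (cadj U * N * U) = cadj U * (N * cadj N) * U"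
    unfolding adj using Uc N
    by (simp_all add: assoc_mult_mat[of _ n n _ n _ n] unitary_mat_cancel_left(2)[OF U, of _ n])
  then show ?thesis using normal by simp
qed

lemma commuting_hermitian_normal:
  assumes hr: "hermitian_mat n R" and hs: "hermitian_mat n S" and com: "R * S = S * R"
  shows "cadj (R + \<i> \<cdot>\<^sub>m S) * (R + \<i> \<cdot>\<^sub>m S) = (R + \<i> \<cdot>\<^sub>m S) * cadj (R + \<i> \<cdot>\<^sub>m S)"
proof -
  have Rc: "R \<in> carrier_mat n n" and Sc: "S \<in> carrier_mat n n"
    using hr hs unfolding hermitian_mat_def by auto
  let ?N = "R + \<i> \<cdot>\<^sub>m S"
  have Nc: "?N \<in> carrier_mat n n" using Rc Sc by simp
  show ?thesis
  proof (rule eq_matI)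
    fix i j assume "i < dim_row (?N * cadj ?N)" "j < dim_col (?N * cadj ?N)"
    then have i: "i < n" and j: "j < n" using Nc by auto
    have N_idx: "?N $$ (a,b) = R $$ (a,b) + \<i> * S $$ (a,b)" if "a < n" "b < n" for a b
      using that Rc Sc by simp
    have adj_idx: "cadj ?N $$ (a,b) = R $$ (a,b) - \<i> * S $$ (a,b)" if "a < n" "b < n" for a b
      using that Rc Sc hermitian_mat_index[OF hr, of a b] hermitian_mat_index[OF hs, of a b] by simp
    have "(cadj ?N * ?N) $$ (i,j)
        = (\<Sum>k<n. (R $$ (i,k) - \<i> * S $$ (i,k)) * (R $$ (k,j) + \<i> * S $$ (k,j)))"
      using index_mult_mat_sum[OF cadj_carrier_mat[OF Nc] Nc i j] Nc i j
      by (auto intro!: sum.cong simp: N_idx adj_idx simp del: index_cadj)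
    also have "\<dots> = (\<Sum>k<n. R $$ (i,k) * R $$ (k,j) + S $$ (i,k) * S $$ (k,j))
        + \<i> * ((R * S) $$ (i,j) - (S * R) $$ (i,j))"
      by (simp add: index_mult_mat_sum[OF Rc Sc i j] index_mult_mat_sum[OF Sc Rc i j]
          algebra_simps sum.distrib sum_subtractf sum_distrib_left)
    also have "\<dots> = (\<Sum>k<n. R $$ (i,k) * R $$ (k,j) + S $$ (i,k) * S $$ (k,j))
        + \<i> * ((S * R) $$ (i,j) - (R * S) $$ (i,j))"
      using com by simp
    also have "\<dots> = (\<Sum>k<n. (R $$ (i,k) + \<i> * S $$ (i,k)) * (R $$ (k,j) - \<i> * S $$ (k,j)))"
      by (simp add: index_mult_mat_sum[OF Rc Sc i j] index_mult_mat_sum[OF Sc Rc i j]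
          algebra_simps sum.distrib sum_subtractf sum_distrib_left)
    also have "\<dots> = (?N * cadj ?N) $$ (i,j)"
      using index_mult_mat_sum[OF Nc cadj_carrier_mat[OF Nc] i j] Nc i j
      by (auto intro!: sum.cong simp: N_idx adj_idx simp del: index_cadj)
    finally show "(cadj ?N * ?N) $$ (i,j) = (?N * cadj ?N) $$ (i,j)" .
  qed (use Nc Sc in auto)
qed

lemma add_i_mult_and_cnj_eq_zeroD:
  assumes "z + \<i> * w = 0" and "cnj z + \<i> * cnj w = 0"
  shows "z = 0" and "w = 0"
  using assms by (auto simp: complex_eq_iff)

lemma hermitian_diagonal_real_diag:
  assumes hA: "hermitian_mat n A" and dA: "diagonal_mat A"
  shows "A = real_diag n (\<lambda>i. Re (A $$ (i,i)))"
proof (rule eq_matI)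
  have Ac: "A \<in> carrier_mat n n" using hA unfolding hermitian_mat_def by simp
  fix i j assume "i < dim_row (real_diag n (\<lambda>i. Re (A $$ (i,i))))" "j < dim_col (real_diag n (\<lambda>i. Re (A $$ (i,i))))"
  then have i: "i < n" and j: "j < n" by auto
  have "Im (A $$ (i,i)) = 0"
    using hermitian_mat_index[OF hA i i] by (metis Reals_cnj_iff complex_is_Real_iff)
  then show "A $$ (i,j) = real_diag n (\<lambda>i. Re (A $$ (i,i))) $$ (i,j)"
    using dA Ac i j unfolding diagonal_mat_def by (auto simp: complex_eq_iff)
qed (use hA in \<open>auto simp: hermitian_mat_def\<close>)

lemma commuting_hermitian_simultaneous_diag:
  assumes hr: "hermitian_mat n \<rho>" and hs: "hermitian_mat n \<sigma>" and com: "\<rho> * \<sigma> = \<sigma> * \<rho>"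
  obtains U p q where "unitary_mat n U"
    and "\<rho> = U * real_diag n p * cadj U" and "\<sigma> = U * real_diag n q * cadj U"
proof -
  have rc: "\<rho> \<in> carrier_mat n n" and sc: "\<sigma> \<in> carrier_mat n n"
    using hr hs unfolding hermitian_mat_def by auto
  define N where "N = \<rho> + \<i> \<cdot>\<^sub>m \<sigma>"
  have Nc: "N \<in> carrier_mat n n" unfolding N_def using rc sc by simp
  obtain U where U: "unitary_mat n U" and ut: "upper_triangular (cadj U * N * U)"
    using unitary_schur[OF Nc] by blast
  have Uc: "U \<in> carrier_mat n n" using U by (rule unitary_mat_carrier)
  have "cadj N * N = N * cadj N"
    unfolding N_def by (rule commuting_hermitian_normal[OF hr hs com])
  moreover have "cadj U * N * U \<in> carrier_mat n n" using Uc Nc by simp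
  ultimately have "diagonal_mat (cadj U * N * U)"
    using normal_upper_triangular_diagonal[OF _ ut normal_unitary_conj[OF U Nc]] by blast
  define R where "R = cadj U * \<rho> * U"
  define S where "S = cadj U * \<sigma> * U"
  have hR: "hermitian_mat n R" and hS: "hermitian_mat n S"
    unfolding hermitian_mat_def R_def S_def using Uc rc sc hr hs
    by (simp_all add: cadj_mult_mat[of _ n n _ n] assoc_mult_mat[of _ n n _ n _ n] hermitian_mat_def)
  have T_idx: "(cadj U * N * U) $$ (i,j) = R $$ (i,j) + \<i> * S $$ (i,j)" if ij: "i < n" "j < n" for i j
  proof -
    have "(cadj U * N * U) $$ (i,j)
        = (\<Sum>k<n. \<Sum>l<n. cadj U $$ (i,k) * (\<rho> $$ (k,l) + \<i> * \<sigma> $$ (k,l)) * U $$ (l,j))"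
      unfolding index_mult_mat3_sum[OF cadj_carrier_mat[OF Uc] Nc Uc ij]
      using rc sc by (intro sum.cong refl) (simp add: N_def)
    then show ?thesis
      unfolding R_def S_def index_mult_mat3_sum[OF cadj_carrier_mat[OF Uc] rc Uc ij]
        index_mult_mat3_sum[OF cadj_carrier_mat[OF Uc] sc Uc ij]
      by (simp add: algebra_simps sum.distrib sum_distrib_left)
  qed
  have offdiag: "R $$ (i,j) = 0 \<and> S $$ (i,j) = 0" if "i < n" "j < n" "i \<noteq> j" for i j
    using add_i_mult_and_cnj_eq_zeroD[of "R $$ (i,j)" "S $$ (i,j)"] that
      \<open>diagonal_mat (cadj U * N * U)\<close> T_idx[of i j] T_idx[of j i] Uc Nc
      hermitian_mat_index[OF hR, of j i] hermitian_mat_index[OF hS, of j i]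
    unfolding diagonal_mat_def by auto
  have "R = real_diag n (\<lambda>i. Re (R $$ (i,i)))" and "S = real_diag n (\<lambda>i. Re (S $$ (i,i)))"
    using hermitian_diagonal_real_diag[OF hR] hermitian_diagonal_real_diag[OF hS] offdiag hR hS
    unfolding diagonal_mat_def hermitian_mat_def by auto
  moreover have "X = U * (cadj U * X * U) * cadj U" if "X \<in> carrier_mat n n" for X
    using that Uc unitary_mat_mult_cadj[OF U]
    by (simp add: assoc_mult_mat[of _ n n _ n _ n] unitary_mat_cancel_left(2)[OF U, of _ n])
  ultimately show ?thesis using that[OF U] rc sc unfolding R_def S_def by metis
qed

section \<open>Positive semidefinite matrices and completely positive maps\<close>

lemma cscalar_cadj_mult_vec:
  assumes M: "M \<in> carrier_mat m n" and v: "v \<in> carrier_vec n" and z: "z \<in> carrier_vec m"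
  shows "map_vec cnj v \<bullet> (cadj M *\<^sub>v z) = map_vec cnj (M *\<^sub>v v) \<bullet> z"
proof -
  have "map_vec cnj v \<bullet> (cadj M *\<^sub>v z) = (\<Sum>I<n. \<Sum>P<m. cnj (v $ I) * cnj (M $$ (P,I)) * z $ P)"
    using M v z by (simp add: scalar_prod_def atLeast0LessThan sum_distrib_left mult.assoc)
  also have "\<dots> = (\<Sum>P<m. \<Sum>I<n. cnj (v $ I) * cnj (M $$ (P,I)) * z $ P)"
    by (rule sum.swap)
  also have "\<dots> = map_vec cnj (M *\<^sub>v v) \<bullet> z"
    using M v z by (simp add: scalar_prod_def atLeast0LessThan sum_distrib_left sum_distrib_right ac_simps)
  finally show ?thesis .
qed

lemma hermitian_mat_congruence:
  assumes X: "hermitian_mat m X" and M: "M \<in> carrier_mat m n"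
  shows "hermitian_mat n (cadj M * X * M)"
proof -
  have Xc: "X \<in> carrier_mat m m" and cX: "cadj X = X" using X unfolding hermitian_mat_def by auto
  have MX: "cadj M * X \<in> carrier_mat n m" using mult_carrier_mat[OF cadj_carrier_mat[OF M] Xc] .
  have "cadj (cadj M * X * M) = cadj M * cadj (cadj M * X)"
    by (rule cadj_mult_mat[OF MX M])
  also have "\<dots> = cadj M * X * M"
    using M Xc cX by (simp add: cadj_mult_mat[OF cadj_carrier_mat[OF M] Xc] assoc_mult_mat[of _ n m _ m _ n])
  finally show ?thesis unfolding hermitian_mat_def using MX M by simp
qed

lemma psd_mat_congruence:
  assumes X: "psd_mat m X" and M: "M \<in> carrier_mat m n"
  shows "psd_mat n (cadj M * X * M)"
proof -
  have Xc: "X \<in> carrier_mat m m" using X unfolding psd_mat_def hermitian_mat_def by auto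
  have "0 \<le> Re (map_vec cnj v \<bullet> ((cadj M * X * M) *\<^sub>v v))" if v: "v \<in> carrier_vec n" for v
  proof -
    have Mv: "M *\<^sub>v v \<in> carrier_vec m" using M v by simp
    have "(cadj M * X * M) *\<^sub>v v = cadj M *\<^sub>v (X *\<^sub>v (M *\<^sub>v v))"
      using assoc_mult_mat_vec[OF mult_carrier_mat[OF cadj_carrier_mat[OF M] Xc] M v]
        assoc_mult_mat_vec[OF cadj_carrier_mat[OF M] Xc Mv] by simp
    then have "map_vec cnj v \<bullet> ((cadj M * X * M) *\<^sub>v v) = map_vec cnj (M *\<^sub>v v) \<bullet> (X *\<^sub>v (M *\<^sub>v v))"
      using cscalar_cadj_mult_vec[OF M v, of "X *\<^sub>v (M *\<^sub>v v)"] Xc Mv by simp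
    then show ?thesis using X Mv unfolding psd_mat_def by simp
  qed
  then show ?thesis
    using hermitian_mat_congruence[OF _ M] X unfolding psd_mat_def by blast
qed

lemma psd_mat_real_diag:
  assumes r: "\<And>i. i < n \<Longrightarrow> 0 \<le> r i"
  shows "psd_mat n (real_diag n r)"
proof -
  have "0 \<le> Re (map_vec cnj v \<bullet> (real_diag n r *\<^sub>v v))" if v: "v \<in> carrier_vec n" for v
  proof -
    have row: "(\<Sum>b<n. cnj (v $ a) * real_diag n r $$ (a,b) * v $ b)
        = complex_of_real (r a * (cmod (v $ a))\<^sup>2)" if a: "a < n" for a
    proof -
      have "(\<Sum>b<n. cnj (v $ a) * real_diag n r $$ (a,b) * v $ b)
          = (\<Sum>b\<in>{a}. cnj (v $ a) * real_diag n r $$ (a,b) * v $ b)"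
        by (rule sum.mono_neutral_right) (use a in auto)
      also have "\<dots> = complex_of_real (r a) * (cnj (v $ a) * v $ a)"
        using a by (simp add: ac_simps)
      finally show ?thesis by (simp add: cnj_mult_self)
    qed
    have "map_vec cnj v \<bullet> (real_diag n r *\<^sub>v v) = complex_of_real (\<Sum>a<n. r a * (cmod (v $ a))\<^sup>2)"
      unfolding quadratic_form_sum[OF real_diag_carrier_mat v] of_real_sum by (intro sum.cong refl row) simp
    then show ?thesis using r by (auto intro!: sum_nonneg)
  qed
  then show ?thesis by (simp add: psd_mat_def hermitian_mat_def)
qed

lemma psd_mat_nonneg_comb:
  assumes t: "\<And>a. a \<in> F \<Longrightarrow> 0 \<le> t a" and Z: "\<And>a. a \<in> F \<Longrightarrow> psd_mat n (Z a)"
    and Y: "Y \<in> carrier_mat n n"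
    and Y_idx: "\<And>I J. I < n \<Longrightarrow> J < n \<Longrightarrow> Y $$ (I,J) = (\<Sum>a\<in>F. complex_of_real (t a) * Z a $$ (I,J))"
  shows "psd_mat n Y"
proof -
  have Zc: "Z a \<in> carrier_mat n n" if "a \<in> F" for a
    using Z[OF that] unfolding psd_mat_def hermitian_mat_def by simp
  have "cadj Y = Y"
  proof (rule eq_matI)
    fix I J assume "I < dim_row Y" "J < dim_col Y"
    then have I: "I < n" and J: "J < n" using Y by auto
    have "cnj (Z a $$ (J,I)) = Z a $$ (I,J)" if "a \<in> F" for a
      using hermitian_mat_index[OF _ I J] Z[OF that] unfolding psd_mat_def by blast
    then show "cadj Y $$ (I,J) = Y $$ (I,J)"
      using Y I J by (simp add: Y_idx)
  qed (use Y in auto)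
  moreover have "0 \<le> Re (map_vec cnj v \<bullet> (Y *\<^sub>v v))" if v: "v \<in> carrier_vec n" for v
  proof -
    have "map_vec cnj v \<bullet> (Y *\<^sub>v v)
        = (\<Sum>a\<in>F. complex_of_real (t a) * (\<Sum>I<n. \<Sum>J<n. cnj (v $ I) * Z a $$ (I,J) * v $ J))"
      unfolding quadratic_form_sum[OF Y v]
      by (simp add: Y_idx sum_distrib_left sum_distrib_right sum.swap[of _ F] ac_simps)
    also have "\<dots> = (\<Sum>a\<in>F. complex_of_real (t a) * (map_vec cnj v \<bullet> (Z a *\<^sub>v v)))"
      using quadratic_form_sum[OF Zc v] by simp
    finally have "Re (map_vec cnj v \<bullet> (Y *\<^sub>v v)) = (\<Sum>a\<in>F. t a * Re (map_vec cnj v \<bullet> (Z a *\<^sub>v v)))"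
      by (simp add: Re_sum)
    also have "\<dots> \<ge> 0"
      using t Z v unfolding psd_mat_def by (intro sum_nonneg) auto
    finally show ?thesis .
  qed
  ultimately show ?thesis using Y unfolding psd_mat_def hermitian_mat_def by blast
qed

lemma block_index_less:
  fixes a k s d :: nat
  assumes "a < k" "s < d" shows "a * d + s < k * d"
proof -
  have "a * d + s < Suc a * d" using assms by simp
  also have "\<dots> \<le> k * d" using assms by (intro mult_right_mono) auto
  finally show ?thesis .
qed

lemma sum_single_block:
  fixes f :: "nat \<Rightarrow> 'b::comm_monoid_add"
  assumes a: "a < k" and zero: "\<And>P. P < k * d \<Longrightarrow> P div d \<noteq> a \<Longrightarrow> f P = 0"
  shows "(\<Sum>P<k * d. f P) = (\<Sum>r<d. f (a * d + r))"
proof -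
  have "(\<Sum>P<k * d. f P) = (\<Sum>P\<in>{a * d..<a * d + d}. f P)"
  proof (rule sum.mono_neutral_right)
    show "{a * d..<a * d + d} \<subseteq> {..<k * d}"
      using block_index_less[OF a] by (auto simp: le_iff_add)
    show "\<forall>P\<in>{..<k * d} - {a * d..<a * d + d}. f P = 0"
    proof
      fix P assume P: "P \<in> {..<k * d} - {a * d..<a * d + d}"
      have "P div d \<noteq> a"
      proof
        assume "P div d = a"
        then have "P = a * d + P mod d" using div_mult_mod_eq[of P d] by simp
        moreover have "P mod d < d" using P by (cases "d = 0") auto
        ultimately show False using P by auto
      qed
      then show "f P = 0" using zero P by auto
    qed
  qed simp
  also have "\<dots> = (\<Sum>r<d. f (a * d + r))"
    using sum.shift_bounds_nat_ivl[of f 0 "a * d" d] by (simp add: atLeast0LessThan add.commute)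
  finally show ?thesis .
qed

text \<open>The matrix \<open>1\<^sub>k \<otimes> K\<close>, for the \<open>d \<times> d'\<close> matrix with entries \<open>K\<close>.\<close>

definition kron_id_mat :: "nat \<Rightarrow> nat \<Rightarrow> nat \<Rightarrow> (nat \<Rightarrow> nat \<Rightarrow> complex) \<Rightarrow> complex mat" where
  "kron_id_mat d d' k K = mat (k * d) (k * d')
     (\<lambda>(P,I). if P div d = I div d' then K (P mod d) (I mod d') else 0)"

lemma kron_id_mat_carrier [simp]: "kron_id_mat d d' k K \<in> carrier_mat (k * d) (k * d')"
  by (simp add: kron_id_mat_def)

lemma index_kron_id_congruence:
  assumes X: "X \<in> carrier_mat (k * d) (k * d)" and I: "I < k * d'" and J: "J < k * d'"
  shows "(cadj (kron_id_mat d d' k K) * X * kron_id_mat d d' k K) $$ (I,J)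
     = (\<Sum>r<d. \<Sum>s<d. cnj (K r (I mod d')) * X $$ ((I div d') * d + r, (J div d') * d + s) * K s (J mod d'))"
proof -
  let ?M = "kron_id_mat d d' k K"
  have aI: "I div d' < k" and aJ: "J div d' < k" using I J by (simp_all add: less_mult_imp_div_less)
  have "(cadj ?M * X * ?M) $$ (I,J) = (\<Sum>P<k * d. \<Sum>L<k * d. cnj (?M $$ (P,I)) * X $$ (P,L) * ?M $$ (L,J))"
    unfolding index_mult_mat3_sum[OF cadj_carrier_mat[OF kron_id_mat_carrier] X kron_id_mat_carrier I J]
    using I by (intro sum.cong refl) (simp add: kron_id_mat_def)
  also have "\<dots> = (\<Sum>r<d. \<Sum>L<k * d. cnj (?M $$ ((I div d') * d + r, I)) * X $$ ((I div d') * d + r, L) * ?M $$ (L,J))"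
    by (rule sum_single_block[OF aI]) (use I in \<open>simp add: kron_id_mat_def\<close>)
  also have "\<dots> = (\<Sum>r<d. \<Sum>s<d. cnj (?M $$ ((I div d') * d + r, I)) * X $$ ((I div d') * d + r, (J div d') * d + s)
      * ?M $$ ((J div d') * d + s, J))"
    by (intro sum.cong refl sum_single_block[OF aJ]) (use J in \<open>simp add: kron_id_mat_def\<close>)
  also have "\<dots> = (\<Sum>r<d. \<Sum>s<d. cnj (K r (I mod d')) * X $$ ((I div d') * d + r, (J div d') * d + s) * K s (J mod d'))"
    by (intro sum.cong refl) (use I J in \<open>simp add: kron_id_mat_def block_index_less[OF aI] block_index_less[OF aJ]\<close>)
  finally show ?thesis .
qed

text \<open>A map of Kraus form \<open>E(X) = \<Sum>\<^sub>a t\<^sub>a K\<^sub>a\<^sup>* X K\<^sub>a\<close> (with \<open>t\<^sub>a \<ge> 0\<close>) acts on block matrices as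
  \<open>\<Sum>\<^sub>a t\<^sub>a (1 \<otimes> K\<^sub>a)\<^sup>* X (1 \<otimes> K\<^sub>a)\<close>, hence is completely positive.\<close>

lemma kraus_form_completely_positive:
  fixes E :: "complex mat \<Rightarrow> complex mat" and t :: "'a \<Rightarrow> real" and K :: "'a \<Rightarrow> nat \<Rightarrow> nat \<Rightarrow> complex"
  assumes t: "\<And>a. a \<in> F \<Longrightarrow> 0 \<le> t a"
    and E: "\<And>X b b'. X \<in> carrier_mat d d \<Longrightarrow> b < d' \<Longrightarrow> b' < d' \<Longrightarrow> E X $$ (b,b') =
        (\<Sum>a\<in>F. complex_of_real (t a) * (\<Sum>r<d. \<Sum>s<d. cnj (K a r b) * X $$ (r,s) * K a s b'))"
    and X: "psd_mat (k * d) X"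
  shows "psd_mat (k * d') (ampliate d d' k E X)"
proof (rule psd_mat_nonneg_comb[OF t])
  let ?M = "\<lambda>a. kron_id_mat d d' k (K a)"
  have Xc: "X \<in> carrier_mat (k * d) (k * d)" using X unfolding psd_mat_def hermitian_mat_def by auto
  show "psd_mat (k * d') (cadj (?M a) * X * ?M a)" for a
    by (rule psd_mat_congruence[OF X kron_id_mat_carrier])
  show "ampliate d d' k E X \<in> carrier_mat (k * d') (k * d')" by (simp add: ampliate_def)
  fix I J assume I: "I < k * d'" and J: "J < k * d'"
  have "I mod d' < d'" and "J mod d' < d'" using I J by (cases "d' = 0"; simp)+
  then show "ampliate d d' k E X $$ (I,J) = (\<Sum>a\<in>F. complex_of_real (t a) * (cadj (?M a) * X * ?M a) $$ (I,J))"
    using I J by (simp add: ampliate_def E index_kron_id_congruence[OF Xc I J])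
qed

section \<open>Measure-and-prepare channels\<close>

text \<open>Measure in the orthonormal basis formed by the columns of \<open>U\<close>, move outcome \<open>i\<close> to \<open>j\<close>
  with probability \<open>T j i\<close>, and prepare the \<open>j\<close>-th column of \<open>W\<close>.\<close>

definition measure_prepare ::
  "nat \<Rightarrow> nat \<Rightarrow> complex mat \<Rightarrow> complex mat \<Rightarrow> (nat \<Rightarrow> nat \<Rightarrow> real) \<Rightarrow> complex mat \<Rightarrow> complex mat" where
  "measure_prepare d d' U W T X =
     W * mat_diag d' (\<lambda>j. \<Sum>i<d. complex_of_real (T j i) * (cadj U * X * U) $$ (i,i)) * cadj W"

lemma measure_prepare_dim [simp]:
  "dim_row (measure_prepare d d' U W T X) = dim_row W" "dim_col (measure_prepare d d' U W T X) = dim_row W"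
  unfolding measure_prepare_def by simp_all

lemma index_measure_prepare:
  assumes U: "U \<in> carrier_mat d d" and W: "W \<in> carrier_mat d' d'" and X: "X \<in> carrier_mat d d"
    and b: "b < d'" and b': "b' < d'"
  shows "measure_prepare d d' U W T X $$ (b,b') = (\<Sum>a\<in>{..<d} \<times> {..<d'}. complex_of_real (T (snd a) (fst a)) *
      (\<Sum>r<d. \<Sum>s<d. cnj (U $$ (r, fst a) * cnj (W $$ (b, snd a))) * X $$ (r,s) * (U $$ (s, fst a) * cnj (W $$ (b', snd a)))))"
proof -
  have UXU: "(cadj U * X * U) $$ (i,i) = (\<Sum>r<d. \<Sum>s<d. cnj (U $$ (r,i)) * X $$ (r,s) * U $$ (s,i))"
    if "i < d" for i
    using index_mult_mat3_sum[OF cadj_carrier_mat[OF U] X U that that] U that by simp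
  have "measure_prepare d d' U W T X $$ (b,b')
      = (\<Sum>j<d'. \<Sum>i<d. complex_of_real (T j i) * (\<Sum>r<d. \<Sum>s<d.
          cnj (U $$ (r, i) * cnj (W $$ (b, j))) * X $$ (r,s) * (U $$ (s, i) * cnj (W $$ (b', j)))))"
    unfolding measure_prepare_def index_conj_mat_diag[OF W b b']
    by (intro sum.cong refl) (simp add: UXU sum_distrib_left sum_distrib_right ac_simps)
  also have "\<dots> = (\<Sum>i<d. \<Sum>j<d'. complex_of_real (T j i) * (\<Sum>r<d. \<Sum>s<d.
          cnj (U $$ (r, i) * cnj (W $$ (b, j))) * X $$ (r,s) * (U $$ (s, i) * cnj (W $$ (b', j)))))"
    by (rule sum.swap)
  finally show ?thesis by (simp add: sum.cartesian_product case_prod_beta)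
qed

lemma measure_prepare_unitary_diag:
  assumes U: "unitary_mat d U" and W: "W \<in> carrier_mat d' d'"
  shows "measure_prepare d d' U W T (U * real_diag d p * cadj U) = W * real_diag d' (stoch_apply d T p) * cadj W"
proof -
  have "mat_diag d' (\<lambda>j. \<Sum>i<d. complex_of_real (T j i) * real_diag d p $$ (i,i))
      = real_diag d' (stoch_apply d T p)"
    by (rule eq_matI) (auto simp: mat_diag_def stoch_apply_def)
  then show ?thesis
    unfolding measure_prepare_def unitary_unconj[OF U real_diag_carrier_mat] by simp
qed

lemma quantum_channel_measure_prepare:
  assumes U: "unitary_mat d U" and W: "unitary_mat d' W" and T: "stochastic_mat d d' T"
  shows "quantum_channel d d' (measure_prepare d d' U W T)"
proof -
  have Uc: "U \<in> carrier_mat d d" and Wc: "W \<in> carrier_mat d' d'"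
    using U W by (simp_all add: unitary_mat_carrier)
  let ?E = "measure_prepare d d' U W T"
  note E_idx = index_measure_prepare[OF Uc Wc]
  have add: "?E (A + B) = ?E A + ?E B" if "A \<in> carrier_mat d d" "B \<in> carrier_mat d d" for A B
    by (rule eq_matI) (use that Wc in \<open>simp_all add: E_idx algebra_simps sum.distrib\<close>)
  have smult: "?E (c \<cdot>\<^sub>m A) = c \<cdot>\<^sub>m ?E A" if "A \<in> carrier_mat d d" for A c
    by (rule eq_matI) (use that Wc in \<open>simp_all add: E_idx sum_distrib_left ac_simps\<close>)
  have trace: "mtrace (?E A) = mtrace A" if A: "A \<in> carrier_mat d d" for A
  proof -
    let ?Y = "cadj U * A * U"
    have "mtrace (?E A) = (\<Sum>j<d'. \<Sum>i<d. complex_of_real (T j i) * ?Y $$ (i,i))"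
      unfolding measure_prepare_def mtrace_unitary_conj[OF W mat_diag_dim] by (simp add: mtrace_def mat_diag_def)
    also have "\<dots> = (\<Sum>i<d. ?Y $$ (i,i))"
      using T by (subst sum.swap) (simp add: stochastic_mat_def flip: sum_distrib_right of_real_sum)
    also have "\<dots> = mtrace A"
      using mtrace_unitary_conj[OF unitary_mat_cadj[OF U] A] Uc A by (simp add: mtrace_def)
    finally show ?thesis .
  qed
  have cp: "psd_mat (k * d') (ampliate d d' k ?E X)" if "psd_mat (k * d) X" for k X
    by (rule kraus_form_completely_positive[where F = "{..<d} \<times> {..<d'}" and t = "\<lambda>a. T (snd a) (fst a)"
          and K = "\<lambda>a r b. U $$ (r, fst a) * cnj (W $$ (b, snd a))", OF _ E_idx that])
      (use T in \<open>auto simp: stochastic_mat_def\<close>)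
  show ?thesis unfolding quantum_channel_def using add smult trace cp Wc by auto
qed

section \<open>Commuting states\<close>

lemma quadratic_form_col:
  assumes A: "A \<in> carrier_mat n n" and U: "U \<in> carrier_mat n n" and i: "i < n"
  shows "map_vec cnj (col U i) \<bullet> (A *\<^sub>v col U i) = (cadj U * A * U) $$ (i,i)"
  unfolding quadratic_form_sum[OF A col_carrier_vec[OF i U]] index_mult_mat3_sum[OF cadj_carrier_mat[OF U] A U i i]
  using U i by (intro sum.cong refl) simp

lemma density_mat_eigenvalues:
  assumes dens: "density_mat n A" and U: "unitary_mat n U" and A: "A = U * real_diag n p * cadj U"
  shows "prob_vec n p"
proof -
  have Uc: "U \<in> carrier_mat n n" using U by (rule unitary_mat_carrier)
  have Ac: "A \<in> carrier_mat n n" using A Uc by simp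
  have "0 \<le> p i" if i: "i < n" for i
  proof -
    have "map_vec cnj (col U i) \<bullet> (A *\<^sub>v col U i) = (cadj U * A * U) $$ (i,i)"
      by (rule quadratic_form_col[OF Ac Uc i])
    also have "cadj U * A * U = real_diag n p"
      unfolding A by (rule unitary_unconj[OF U real_diag_carrier_mat])
    finally have "map_vec cnj (col U i) \<bullet> (A *\<^sub>v col U i) = complex_of_real (p i)" using i by simp
    moreover have "col U i \<in> carrier_vec n" using Uc i by simp
    ultimately show ?thesis using dens unfolding density_mat_def psd_mat_def by force
  qed
  moreover have "(\<Sum>i<n. p i) = 1"
    using dens mtrace_unitary_conj[OF U real_diag_carrier_mat] mtrace_real_diag
    unfolding A density_mat_def by (metis of_real_eq_1_iff)
  ultimately show ?thesis unfolding prob_vec_def by blast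
qed

lemma invertible_unitary_diag_nonzero:
  assumes U: "unitary_mat n U" and inv: "invertible_mat A" and A: "A = U * real_diag n q * cadj U"
    and i: "i < n"
  shows "q i \<noteq> 0"
proof
  assume q0: "q i = 0"
  have Uc: "U \<in> carrier_mat n n" using U by (rule unitary_mat_carrier)
  have Ac: "A \<in> carrier_mat n n" using A Uc by simp
  obtain B where AB: "A * B = 1\<^sub>m n" and BA: "B * A = 1\<^sub>m (dim_row B)"
    using inv Ac unfolding invertible_mat_def inverts_mat_def by auto
  have Bc: "B \<in> carrier_mat n n"
    using arg_cong[OF AB, of dim_col] arg_cong[OF BA, of dim_col] Ac by auto
  have "U = B * (A * U)"
    using Bc Ac Uc BA by (simp flip: assoc_mult_mat[of _ n n _ n _ n])
  also have "A * U = U * real_diag n q"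
    unfolding A by (rule unitary_mat_cancel_right(1)[OF U, of _ n]) (use Uc in simp)
  finally have "U = B * (U * real_diag n q)" .
  then have "U $$ (k,i) = 0" if "k < n" for k
    using arg_cong[of _ _ "\<lambda>X. X $$ (k,i)", OF \<open>U = B * (U * real_diag n q)\<close>]
      real_diag_mult_right_index[of "B * U" n n k i q] Bc Uc that i q0
    by (simp add: assoc_mult_mat[of _ n n _ n _ n])
  then have "(cadj U * U) $$ (i,i) = 0"
    using index_mult_mat_sum[OF cadj_carrier_mat[OF Uc] Uc i i] Uc i by simp
  then show False using unitary_mat_cadj_mult[OF U] i by simp
qed

lemma density_mat_unitary_diag:
  assumes W: "unitary_mat n W" and r: "prob_vec n r"
  shows "density_mat n (W * real_diag n r * cadj W)"
proof -
  have Wc: "W \<in> carrier_mat n n" using W by (rule unitary_mat_carrier)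
  have "psd_mat n (cadj (cadj W) * real_diag n r * cadj W)"
    using psd_mat_congruence[OF psd_mat_real_diag cadj_carrier_mat[OF Wc]] r by (simp add: prob_vec_def)
  moreover have "mtrace (W * real_diag n r * cadj W) = 1"
    using mtrace_unitary_conj[OF W real_diag_carrier_mat] r
    by (simp add: mtrace_real_diag prob_vec_def del: of_real_sum)
  ultimately show ?thesis unfolding density_mat_def by simp
qed

lemma rel_entropy_unitary_diag:
  assumes U: "unitary_mat n U"
    and \<rho>: "\<rho> = U * real_diag n p * cadj U" and \<sigma>: "\<sigma> = U * real_diag n q * cadj U"
  shows "rel_entropy \<rho> \<sigma> = expect n p (log_ratio p q)"
    and "rel_variance \<rho> \<sigma> = variance n p (log_ratio p q)"
proof -
  have Uc: "U \<in> carrier_mat n n" using U by (rule unitary_mat_carrier)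
  have log_diff: "mlog \<rho> - mlog \<sigma> = U * real_diag n (log_ratio p q) * cadj U"
    unfolding mlog_def mat_fun_unitary_diag[OF U \<rho>] mat_fun_unitary_diag[OF U \<sigma>]
    by (simp add: unitary_conj_minus[OF Uc] real_diag_minus log_ratio_def[abs_def])
  have "\<rho> * (mlog \<rho> - mlog \<sigma>) = U * real_diag n (\<lambda>i. p i * log_ratio p q i) * cadj U"
    unfolding log_diff by (simp add: \<rho> unitary_conj_mult[OF U] real_diag_mult)
  then show entropy: "rel_entropy \<rho> \<sigma> = expect n p (log_ratio p q)"
    unfolding rel_entropy_def by (simp add: mtrace_unitary_conj[OF U] mtrace_real_diag expect_def)
  have "\<rho> * ((mlog \<rho> - mlog \<sigma>) * (mlog \<rho> - mlog \<sigma>))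
      = U * real_diag n (\<lambda>i. p i * (log_ratio p q i)\<^sup>2) * cadj U"
    unfolding log_diff by (simp add: \<rho> unitary_conj_mult[OF U] real_diag_mult power2_eq_square)
  then show "rel_variance \<rho> \<sigma> = variance n p (log_ratio p q)"
    unfolding rel_variance_def entropy by (simp add: mtrace_unitary_conj[OF U] mtrace_real_diag expect_def variance_def)
qed

lemma trace_dist_unitary_diag:
  assumes W: "unitary_mat n W" and A: "A = W * real_diag n a * cadj W" and B: "B = W * real_diag n b * cadj W"
  shows "trace_dist A B = (\<Sum>i<n. \<bar>a i - b i\<bar>) / 2"
proof -
  have Wc: "W \<in> carrier_mat n n" using W by (rule unitary_mat_carrier)
  have diff: "A - B = W * real_diag n (\<lambda>i. a i - b i) * cadj W"
    unfolding A B by (simp add: unitary_conj_minus[OF Wc] real_diag_minus)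
  have "cadj (A - B) * (A - B) = W * real_diag n (\<lambda>i. (a i - b i) * (a i - b i)) * cadj W"
    unfolding diff cadj_unitary_conj[OF Wc real_diag_carrier_mat] by (simp add: unitary_conj_mult[OF W] real_diag_mult)
  then have "mat_fun sqrt (cadj (A - B) * (A - B)) = W * real_diag n (\<lambda>i. \<bar>a i - b i\<bar>) * cadj W"
    using mat_fun_unitary_diag[OF W] by (simp add: real_sqrt_abs2)
  then show ?thesis
    unfolding trace_dist_def trace_norm_def by (simp add: mtrace_unitary_conj[OF W] mtrace_real_diag)
qed

theorem theorem8:
  fixes d d' :: nat and \<rho> \<sigma> \<rho>' \<sigma>' :: "complex mat" and \<epsilon> :: real
  assumes "density_mat d \<rho>" and "density_mat d \<sigma>"
    and "\<rho> * \<sigma> = \<sigma> * \<rho>"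
    and "density_mat d' \<rho>'" and "density_mat d' \<sigma>'"
    and "\<rho>' * \<sigma>' = \<sigma>' * \<rho>'"
    and "invertible_mat \<sigma>" and "invertible_mat \<sigma>'"
    and "0 < \<epsilon>" and "\<epsilon> < 1"
    and "rel_entropy \<rho> \<sigma> - f_dev \<rho> \<sigma> \<epsilon> \<ge> rel_entropy \<rho>' \<sigma>' + f_dev \<rho>' \<sigma>' \<epsilon>"
  shows "pair_majorizes_approx d d' \<epsilon> \<rho> \<sigma> \<rho>' \<sigma>'"
proof -
  have herm: "hermitian_mat n A" if "density_mat n A" for n A
    using that unfolding density_mat_def psd_mat_def by auto
  obtain U p q where U: "unitary_mat d U"
    and \<rho>: "\<rho> = U * real_diag d p * cadj U" and \<sigma>: "\<sigma> = U * real_diag d q * cadj U"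
    using commuting_hermitian_simultaneous_diag[OF herm herm assms(3)] assms(1,2) by metis
  obtain W p' q' where W: "unitary_mat d' W"
    and \<rho>': "\<rho>' = W * real_diag d' p' * cadj W" and \<sigma>': "\<sigma>' = W * real_diag d' q' * cadj W"
    using commuting_hermitian_simultaneous_diag[OF herm herm assms(6)] assms(4,5) by metis
  have p: "prob_vec d p" and q: "prob_vec d q" and p': "prob_vec d' p'" and q': "prob_vec d' q'"
    using density_mat_eigenvalues assms(1,2,4,5) U \<rho> \<sigma> W \<rho>' \<sigma>' by blast+
  have q_pos: "0 < q i" if "i < d" for i
    using prob_vec_nonneg[OF q that] invertible_unitary_diag_nonzero[OF U assms(7) \<sigma> that] by simp
  have q'_pos: "0 < q' j" if "j < d'" for j
    using prob_vec_nonneg[OF q' that] invertible_unitary_diag_nonzero[OF W assms(8) \<sigma>' that] by simp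
  obtain T where T: "stochastic_mat d d' T" and Tq: "\<And>j. j < d' \<Longrightarrow> stoch_apply d T q j = q' j"
    and Tp: "(\<Sum>j<d'. \<bar>p' j - stoch_apply d T p j\<bar>) \<le> \<epsilon>"
    using stochastic_map_of_entropy_gap[OF p q q_pos p' q' q'_pos assms(9,10)] assms(11)
    unfolding f_dev_def rel_entropy_unitary_diag[OF U \<rho> \<sigma>] rel_entropy_unitary_diag[OF W \<rho>' \<sigma>'] by auto
  define \<rho>\<epsilon> where "\<rho>\<epsilon> = W * real_diag d' (stoch_apply d T p) * cadj W"
  let ?E = "measure_prepare d d' U W T"
  note E_diag = measure_prepare_unitary_diag[OF U unitary_mat_carrier[OF W]]
  have "?E \<rho> = \<rho>\<epsilon>" unfolding \<rho> \<rho>\<epsilon>_def E_diag ..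
  moreover have "?E \<sigma> = \<sigma>'" unfolding \<sigma> \<sigma>' E_diag using real_diag_cong[OF Tq] by simp
  moreover have "trace_dist \<rho>' \<rho>\<epsilon> \<le> \<epsilon>"
    using trace_dist_unitary_diag[OF W \<rho>' \<rho>\<epsilon>_def] Tp assms(9) by simp
  ultimately show ?thesis
    unfolding pair_majorizes_approx_def pair_majorizes_def
    using quantum_channel_measure_prepare[OF U W T] density_mat_unitary_diag[OF W stoch_apply_prob_vec[OF T p]]
    unfolding \<rho>\<epsilon>_def by blast
qed

end
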